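(* Let $(\Omega,\mathcal{F},(\mathbb{F}_n)_{n\in\mathbb{N}_0},\mathbb{P})$ be a filtered probability space. For every $n\in\mathbb{N}$ let $\gamma_n\colon\Omega\to\mathbb{R}$ be $\mathbb{F}_{n-1}$-measurable, assume $\mathbb{P}(\limsup_{n\to\infty}\gamma_n=0)=\mathbb{P}(\sum_{n=1}^\infty|\gamma_n|=\infty)=1$, and assume $\mathbb{P}(\gamma_{n+1}\le\gamma_n)=1$ for all $n\in\mathbb{N}$. Let $d\in\mathbb{N}$, $\vartheta\in\mathbb{R}^d$, let $g\colon\mathbb{R}^d\to\mathbb{R}^d$ be measurable and locally bounded, and let $c\in(0,\infty)$ satisfy $\langle\theta-\vartheta,g(\theta)\rangle\le-c\|\theta-\vartheta\|^2$ for all $\theta\in\mathbb{R}^d$. Let $\Theta\colon\mathbb{N}_0\times\Omega\to\mathbb{R}^d$ be an $(\mathbb{F}_n)_{n\in\mathbb{N}_0}$-adapted process, let $D\colon\mathbb{N}\times\Omega\to\mathbb{R}^d$ be an $(\mathbb{F}_n)_{n\in\mathbb{N}}$-adapted process with $\mathbb{E}[\sup_{n\in\mathbb{N}}\|D_n\|^2]<\infty$, and assume that for all $n\in\mathbb{N}$ it holds $\mathbb{P}$-a.s. that $$\Theta_n=\Theta_{n-1}+\gamma_n g(\Theta_{n-1})+\gamma_n D_n\quad\text{and}\quad\mathbb{E}[D_n\mid\mathbb{F}_{n-1}]=0.$$ For every $t\in[0,\infty)$ let $N_t=\inf\{n\in\mathbb{N}_0\colon\sum_{k=1}^n\gamma_k\ge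 t\}$, and let $\mathcal{E}=\{\sup_{n\in\mathbb{N}}\|\Theta_n\|<\infty\}$. Then $$\limsup_{t\to\infty}\mathbb{E}\big[\min\{1,\|\Theta_{N_t}-\vartheta\|\mathbb{1}_{\mathcal{E}}\}\big]=0.$$
   Context: $\langle\cdot,\cdot\rangle$ and $\|\cdot\|$ denote the Euclidean inner product and norm; $\mathbb{1}_{\mathcal{E}}$ is the indicator of $\mathcal{E}$. *)

theory Defs
  imports "HOL-Probability.Probability"
begin

definition hit_index :: "(nat \<Rightarrow> 'a \<Rightarrow> real) \<Rightarrow> real \<Rightarrow> 'a \<Rightarrow> nat" where
  "hit_index \<gamma> t \<omega> = Inf {n. t \<le> (\<Sum>k\<in>{1..n}. \<gamma> k \<omega>)}"

end

theory Submission
  imports Defs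
begin

(*
  Write e_n = Theta_n - vartheta and w_n = exp (2 c (gamma_1 + ... + gamma_n)). The drift condition
  and 1 - x <= exp (-x) give the one-step inequality
    w_n |e_n|^2 <= w_(n-1) |e_(n-1)|^2 + 2 gamma_n w_n <e_(n-1), D_n>
                   + 2 gamma_n^2 w_n (|g (Theta_(n-1))|^2 + |D_n|^2).
  Telescoping up to N_t and dividing by w_(N_t) >= exp (2 c t) bounds |e_(N_t)|^2 by a drift term,
  controlled by the discounted sum exp (-a t) * sum_(n <= N_t) gamma_n^2 w_n, which tends to 0
  pathwise because gamma_n -> 0, plus a martingale transform. The martingale differences D_n are
  orthogonal, so the second moment of the transform is a sum of squares, which tends to 0 by
  dominated convergence. The coefficients of the transform are kept bounded by localising to the
  paths that stay in the ball of radius j; on the event {sup_n |Theta_n| < oo} the probability of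
  leaving it tends to 0 as j -> oo.
*)

lemma decreasing_from_one_le:
  fixes a :: "nat \<Rightarrow> 'b::order"
  assumes "\<And>n. n \<ge> 1 \<Longrightarrow> a (Suc n) \<le> a n" and "1 \<le> m" and "m \<le> n"
  shows "a n \<le> a m"
  using \<open>m \<le> n\<close>
proof (induction n rule: dec_induct)
  case (step n)
  then show ?case using assms(1)[of n] \<open>1 \<le> m\<close> by (meson le_trans order_trans)
qed simp

lemma step_mult_exp_le:
  fixes a x y L :: real
  assumes a: "0 < a" and y: "0 \<le> y" "y \<le> L"
  shows "y * exp (a * (x + y)) \<le> exp (a * L) / a * (exp (a * (x + y)) - exp (a * x))"
proof -
  have "a * y \<le> exp (a * y) - 1" using exp_ge_add_one_self[of "a * y"] by linarith
  moreover have "exp (a * y) \<le> exp (a * L)" using a y by simp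
  ultimately have "a * y * exp (a * y) \<le> (exp (a * y) - 1) * exp (a * L)"
    using a y by (intro mult_mono) auto
  then have "a * y * exp (a * y) * exp (a * x) \<le> (exp (a * y) - 1) * exp (a * L) * exp (a * x)"
    by (simp add: mult_right_mono)
  then have "a * (y * exp (a * (x + y))) \<le> a * (exp (a * L) / a * (exp (a * (x + y)) - exp (a * x)))"
    using a by (simp add: exp_add distrib_left algebra_simps)
  then show ?thesis using a mult_le_cancel_left_pos by blast
qed

text \<open>A Riemann-sum comparison with \<open>\<integral> exp (a x) dx\<close>.\<close>
lemma sum_mult_exp_partial_sums_le:
  fixes \<gamma> :: "nat \<Rightarrow> real"
  assumes a: "0 < a" and nonneg: "\<And>n. n \<ge> 1 \<Longrightarrow> 0 \<le> \<gamma> n" and bound: "\<And>n. n \<ge> 1 \<Longrightarrow> \<gamma> n \<le> L"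
    and "m \<le> N"
  shows "(\<Sum>n\<in>{m<..N}. \<gamma> n * exp (a * sum \<gamma> {1..n}))
     \<le> exp (a * L) / a * (exp (a * sum \<gamma> {1..N}) - exp (a * sum \<gamma> {1..m}))"
  using \<open>m \<le> N\<close>
proof (induction N rule: dec_induct)
  case (step n)
  have "{m<..Suc n} = insert (Suc n) {m<..n}" using step.hyps(1) by auto
  then have "(\<Sum>k\<in>{m<..Suc n}. \<gamma> k * exp (a * sum \<gamma> {1..k}))
      = \<gamma> (Suc n) * exp (a * (sum \<gamma> {1..n} + \<gamma> (Suc n))) + (\<Sum>k\<in>{m<..n}. \<gamma> k * exp (a * sum \<gamma> {1..k}))"
    by (simp add: add.commute)
  also have "\<dots> \<le> exp (a * L) / a * (exp (a * (sum \<gamma> {1..n} + \<gamma> (Suc n))) - exp (a * sum \<gamma> {1..n}))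
      + exp (a * L) / a * (exp (a * sum \<gamma> {1..n}) - exp (a * sum \<gamma> {1..m}))"
    using step.IH nonneg[of "Suc n"] bound[of "Suc n"] by (intro add_mono step_mult_exp_le a) auto
  also have "\<dots> = exp (a * L) / a * (exp (a * sum \<gamma> {1..Suc n}) - exp (a * sum \<gamma> {1..m}))"
    by (simp add: algebra_simps)
  finally show ?case .
qed simp

definition discounted_sq_sum :: "real \<Rightarrow> (nat \<Rightarrow> real) \<Rightarrow> nat \<Rightarrow> real \<Rightarrow> real" where
  "discounted_sq_sum a \<gamma> N t = exp (- a * t) * (\<Sum>n\<in>{1..N}. \<gamma> n ^ 2 * exp (a * sum \<gamma> {1..n}))"

lemma discounted_sq_sum_nonneg: "0 \<le> discounted_sq_sum a \<gamma> N t"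
  unfolding discounted_sq_sum_def by (intro mult_nonneg_nonneg sum_nonneg) auto

lemma sum_sq_mult_exp_tail_le:
  fixes \<gamma> :: "nat \<Rightarrow> real"
  assumes a: "0 < a" and nonneg: "\<And>n. n \<ge> 1 \<Longrightarrow> 0 \<le> \<gamma> n"
    and decr: "\<And>n. n \<ge> 1 \<Longrightarrow> \<gamma> (Suc n) \<le> \<gamma> n" and T: "sum \<gamma> {1..N} \<le> T"
  shows "(\<Sum>n\<in>{m<..N}. \<gamma> n ^ 2 * exp (a * sum \<gamma> {1..n})) \<le> \<gamma> (Suc m) * exp (a * \<gamma> 1) / a * exp (a * T)"
proof (cases "m \<le> N")
  case True
  have le_first: "\<gamma> n \<le> \<gamma> 1" if "n \<ge> 1" for n
    using decreasing_from_one_le[of \<gamma> 1 n] decr that by simp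
  have "(\<Sum>n\<in>{m<..N}. \<gamma> n ^ 2 * exp (a * sum \<gamma> {1..n}))
      \<le> (\<Sum>n\<in>{m<..N}. \<gamma> (Suc m) * (\<gamma> n * exp (a * sum \<gamma> {1..n})))"
  proof (rule sum_mono)
    fix n assume "n \<in> {m<..N}"
    then have "\<gamma> n \<le> \<gamma> (Suc m)" "0 \<le> \<gamma> n"
      using decreasing_from_one_le[of \<gamma> "Suc m" n] decr nonneg[of n] by auto
    then show "\<gamma> n ^ 2 * exp (a * sum \<gamma> {1..n}) \<le> \<gamma> (Suc m) * (\<gamma> n * exp (a * sum \<gamma> {1..n}))"
      by (simp add: power2_eq_square mult.assoc[symmetric] mult_right_mono)
  qed
  also have "\<dots> = \<gamma> (Suc m) * (\<Sum>n\<in>{m<..N}. \<gamma> n * exp (a * sum \<gamma> {1..n}))"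
    by (simp add: sum_distrib_left)
  also have "\<dots> \<le> \<gamma> (Suc m) * (exp (a * \<gamma> 1) / a * (exp (a * sum \<gamma> {1..N}) - exp (a * sum \<gamma> {1..m})))"
    using sum_mult_exp_partial_sums_le[OF a nonneg le_first True] nonneg[of "Suc m"]
    by (intro mult_left_mono) auto
  also have "\<dots> \<le> \<gamma> (Suc m) * (exp (a * \<gamma> 1) / a * exp (a * T))"
  proof -
    have "exp (a * sum \<gamma> {1..N}) \<le> exp (a * T)" using T a by simp
    then have "exp (a * sum \<gamma> {1..N}) - exp (a * sum \<gamma> {1..m}) \<le> exp (a * T)"
      using exp_gt_zero[of "a * sum \<gamma> {1..m}"] by linarith
    then show ?thesis using a nonneg[of "Suc m"] by (intro mult_left_mono) auto
  qed
  finally show ?thesis by simp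
next
  case False
  then show ?thesis using a nonneg[of "Suc m"] by simp
qed

lemma discounted_sq_sum_split:
  fixes \<gamma> :: "nat \<Rightarrow> real"
  assumes a: "0 < a" and nonneg: "\<And>n. n \<ge> 1 \<Longrightarrow> 0 \<le> \<gamma> n"
    and decr: "\<And>n. n \<ge> 1 \<Longrightarrow> \<gamma> (Suc n) \<le> \<gamma> n"
    and N: "1 \<le> N" "sum \<gamma> {1..N - 1} < t"
  shows "discounted_sq_sum a \<gamma> N t \<le> discounted_sq_sum a \<gamma> m t + \<gamma> (Suc m) * exp (2 * a * \<gamma> 1) / a"
proof -
  define f where "f n = \<gamma> n ^ 2 * exp (a * sum \<gamma> {1..n})" for n
  have "sum \<gamma> {1..N} = sum \<gamma> {1..N - 1} + \<gamma> N"
    using N(1) by (cases N) auto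
  moreover have "\<gamma> N \<le> \<gamma> 1"
    using decreasing_from_one_le[of \<gamma> 1 N] decr N(1) by simp
  ultimately have "sum \<gamma> {1..N} \<le> t + \<gamma> 1" using N(2) by linarith
  with a nonneg decr have tail: "sum f {m<..N} \<le> \<gamma> (Suc m) * exp (a * \<gamma> 1) / a * exp (a * (t + \<gamma> 1))"
    unfolding f_def by (rule sum_sq_mult_exp_tail_le)
  have head: "sum f {1..N} \<le> sum f {1..m} + sum f {m<..N}"
  proof (cases "m \<le> N")
    case True
    then have "{1..N} = {1..m} \<union> {m<..N}" by auto
    then show ?thesis by (simp add: sum.union_disjoint ivl_disj_int)
  next
    case False
    then show ?thesis by (simp add: f_def sum_mono2)
  qed
  have "discounted_sq_sum a \<gamma> N t
      \<le> exp (- a * t) * (sum f {1..m} + \<gamma> (Suc m) * exp (a * \<gamma> 1) / a * exp (a * (t + \<gamma> 1)))"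
    unfolding discounted_sq_sum_def f_def[symmetric] using head tail by (intro mult_left_mono) auto
  also have "\<dots> = discounted_sq_sum a \<gamma> m t + \<gamma> (Suc m) * exp (2 * a * \<gamma> 1) / a"
    unfolding discounted_sq_sum_def f_def by (simp add: algebra_simps exp_add[symmetric])
  finally show ?thesis .
qed

lemma discounted_sq_sum_le:
  fixes \<gamma> :: "nat \<Rightarrow> real"
  assumes "0 < a" "\<And>n. n \<ge> 1 \<Longrightarrow> 0 \<le> \<gamma> n" "\<And>n. n \<ge> 1 \<Longrightarrow> \<gamma> (Suc n) \<le> \<gamma> n"
    and "1 \<le> N" "sum \<gamma> {1..N - 1} < t"
  shows "discounted_sq_sum a \<gamma> N t \<le> \<gamma> 1 * exp (2 * a * \<gamma> 1) / a"
  using discounted_sq_sum_split[OF assms, of 0] by (simp add: discounted_sq_sum_def)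

lemma tendsto_exp_neg_mult_at_top:
  fixes a :: real
  assumes "0 < a"
  shows "((\<lambda>t. exp (- a * t)) \<longlongrightarrow> 0) at_top"
proof -
  have "filterlim (\<lambda>t::real. - a * t) at_bot at_top"
    using assms by (intro filterlim_tendsto_neg_mult_at_bot[OF tendsto_const] filterlim_ident) auto
  then show ?thesis by (rule filterlim_compose[OF exp_at_bot])
qed

lemma discounted_sq_sum_tendsto_zero:
  fixes \<gamma> :: "nat \<Rightarrow> real" and N :: "real \<Rightarrow> nat"
  assumes a: "0 < a" and nonneg: "\<And>n. n \<ge> 1 \<Longrightarrow> 0 \<le> \<gamma> n"
    and decr: "\<And>n. n \<ge> 1 \<Longrightarrow> \<gamma> (Suc n) \<le> \<gamma> n" and lim: "\<gamma> \<longlonglongrightarrow> 0"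
    and N: "\<And>t. 0 < t \<Longrightarrow> 1 \<le> N t \<and> sum \<gamma> {1..N t - 1} < t"
  shows "((\<lambda>t. discounted_sq_sum a \<gamma> (N t) t) \<longlongrightarrow> 0) at_top"
proof (rule order_tendstoI)
  fix e :: real assume "e < 0"
  then show "\<forall>\<^sub>F t in at_top. e < discounted_sq_sum a \<gamma> (N t) t"
    using discounted_sq_sum_nonneg by (intro always_eventually allI) (rule less_le_trans)
next
  fix e :: real assume e: "0 < e"
  define K where "K = exp (2 * a * \<gamma> 1) / a"
  have K: "0 < K" using a unfolding K_def by simp
  obtain m where m: "\<gamma> (Suc m) * K < e / 2"
  proof -
    have "\<forall>\<^sub>F n in sequentially. \<gamma> n < e / (2 * K)"
      using lim e K by (intro order_tendstoD) auto
    then obtain n0 where "\<And>n. n0 \<le> n \<Longrightarrow> \<gamma> n < e / (2 * K)"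
      unfolding eventually_sequentially by blast
    then have "\<gamma> (Suc n0) * K < e / (2 * K) * K" using K by (intro mult_strict_right_mono) auto
    then show thesis using K by (intro that[of n0]) simp
  qed
  have "((\<lambda>t. discounted_sq_sum a \<gamma> m t) \<longlongrightarrow> 0) at_top"
    unfolding discounted_sq_sum_def
    using tendsto_mult_left_zero[OF tendsto_exp_neg_mult_at_top[OF a]] by simp
  then have "\<forall>\<^sub>F t in at_top. discounted_sq_sum a \<gamma> m t < e / 2"
    using e by (intro order_tendstoD) auto
  then show "\<forall>\<^sub>F t in at_top. discounted_sq_sum a \<gamma> (N t) t < e"
    using eventually_gt_at_top[of 0]
  proof eventually_elim
    case (elim t)
    have "discounted_sq_sum a \<gamma> (N t) t \<le> discounted_sq_sum a \<gamma> m t + \<gamma> (Suc m) * K"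
      using discounted_sq_sum_split[where \<gamma> = \<gamma> and N = "N t" and t = t and m = m] a nonneg decr N[OF elim(2)]
      unfolding K_def by simp
    then show ?case using elim(1) m by linarith
  qed
qed

lemma norm_sq_drift_step_le:
  fixes x y z :: "'b::real_inner" and \<gamma> c :: real
  assumes \<gamma>: "0 \<le> \<gamma>" and drift: "inner x y \<le> - c * (norm x)\<^sup>2"
  shows "(norm (x + \<gamma> *\<^sub>R y + \<gamma> *\<^sub>R z))\<^sup>2
    \<le> exp (- 2 * c * \<gamma>) * (norm x)\<^sup>2 + 2 * \<gamma> * inner x z + 2 * \<gamma>\<^sup>2 * ((norm y)\<^sup>2 + (norm z)\<^sup>2)"
proof -
  define X where "X = (norm x)\<^sup>2"
  define R where "R = (norm y)\<^sup>2 + (norm z)\<^sup>2"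
  have square: "inner (x + v) (x + v) = inner x x + 2 * inner x v + inner v v" for v
    by (simp add: inner_add_left inner_add_right inner_commute[of v x])
  have "(norm (x + \<gamma> *\<^sub>R y + \<gamma> *\<^sub>R z))\<^sup>2 = inner (x + \<gamma> *\<^sub>R (y + z)) (x + \<gamma> *\<^sub>R (y + z))"
    by (simp add: power2_norm_eq_inner scaleR_right_distrib add.assoc)
  also have "\<dots> = inner x x + 2 * inner x (\<gamma> *\<^sub>R (y + z)) + inner (\<gamma> *\<^sub>R (y + z)) (\<gamma> *\<^sub>R (y + z))"
    by (rule square)
  also have "\<dots> = inner x x + 2 * \<gamma> * inner x y + 2 * \<gamma> * inner x z + \<gamma>\<^sup>2 * inner (y + z) (y + z)"
    by (simp add: inner_add_right power2_eq_square distrib_left)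
  finally have expand: "(norm (x + \<gamma> *\<^sub>R y + \<gamma> *\<^sub>R z))\<^sup>2
      = X + 2 * \<gamma> * inner x y + 2 * \<gamma> * inner x z + \<gamma>\<^sup>2 * (norm (y + z))\<^sup>2"
    unfolding X_def by (simp add: power2_norm_eq_inner)
  have "(norm (y + z))\<^sup>2 \<le> (norm y + norm z)\<^sup>2"
    by (rule power_mono[OF norm_triangle_ineq norm_ge_zero])
  also have "\<dots> \<le> 2 * R"
    unfolding R_def using sum_squares_bound[of "norm y" "norm z"] by (simp add: power2_sum)
  finally have "\<gamma>\<^sup>2 * (norm (y + z))\<^sup>2 \<le> \<gamma>\<^sup>2 * (2 * R)"
    by (rule mult_left_mono) simp
  moreover have "\<gamma>\<^sup>2 * (2 * R) = 2 * \<gamma>\<^sup>2 * R" by (simp add: mult_ac)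
  moreover have "2 * \<gamma> * inner x y \<le> 2 * \<gamma> * (- c * X)"
    unfolding X_def using drift \<gamma> by (intro mult_left_mono) auto
  moreover have "2 * \<gamma> * (- c * X) = - (2 * c * \<gamma> * X)" by (simp add: mult_ac)
  moreover have "(1 - 2 * c * \<gamma>) * X \<le> exp (- 2 * c * \<gamma>) * X"
    unfolding X_def using exp_ge_add_one_self[of "- 2 * c * \<gamma>"] by (intro mult_right_mono) auto
  moreover have "(1 - 2 * c * \<gamma>) * X = X - 2 * c * \<gamma> * X" by (simp add: left_diff_distrib)
  ultimately show ?thesis unfolding expand X_def[symmetric] R_def[symmetric] by linarith
qed

lemma le_telescoping_sum:
  fixes u a :: "nat \<Rightarrow> 'b::ordered_comm_monoid_add"
  assumes "\<And>n. 1 \<le> n \<Longrightarrow> n \<le> N \<Longrightarrow> u n \<le> u (n - 1) + a n"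
  shows "u N \<le> u 0 + (\<Sum>n\<in>{1..N}. a n)"
  using assms
proof (induction N)
  case (Suc N)
  have "u (Suc N) \<le> u N + a (Suc N)" using Suc.prems[of "Suc N"] by simp
  also have "\<dots> \<le> u 0 + (\<Sum>n\<in>{1..N}. a n) + a (Suc N)"
    using Suc by (intro add_right_mono) simp
  finally show ?case by (simp add: add.assoc)
qed simp

lemma locally_bounded_imp_bounded_image:
  fixes g :: "'b::metric_space \<Rightarrow> 'c::metric_space"
  assumes "\<And>x. \<exists>e>0. bounded (g ` ball x e)" and "compact K"
  shows "bounded (g ` K)"
proof -
  obtain e where e: "\<And>x. 0 < e x \<and> bounded (g ` ball x (e x))" using assms(1) by metis
  note \<open>compact K\<close>
  moreover have "\<And>x. x \<in> K \<Longrightarrow> open (ball x (e x))" by simp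
  moreover have "K \<subseteq> (\<Union>x\<in>K. ball x (e x))"
  proof
    fix x assume "x \<in> K"
    moreover have "x \<in> ball x (e x)" using e[of x] by simp
    ultimately show "x \<in> (\<Union>x\<in>K. ball x (e x))" by blast
  qed
  ultimately obtain C where C: "C \<subseteq> K" "finite C" "K \<subseteq> (\<Union>x\<in>C. ball x (e x))"
    by (rule compactE_image)
  have "bounded (\<Union>x\<in>C. g ` ball x (e x))" using C(2) e by (intro bounded_UN) auto
  moreover have "g ` K \<subseteq> (\<Union>x\<in>C. g ` ball x (e x))" using C(3) by blast
  ultimately show ?thesis by (rule bounded_subset)
qed

lemma sum_le_sum_vanishing_outside:
  fixes f g :: "'b \<Rightarrow> real"
  assumes "finite A" "finite B" "\<And>n. n \<in> A \<Longrightarrow> n \<notin> B \<Longrightarrow> f n = 0"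
    "\<And>n. n \<in> A \<Longrightarrow> n \<in> B \<Longrightarrow> f n \<le> g n" "\<And>n. n \<in> B \<Longrightarrow> 0 \<le> g n"
  shows "sum f A \<le> sum g B"
proof -
  have "sum f A = sum f (A \<inter> B)"
    using assms(1,3) by (intro sum.mono_neutral_right) auto
  also have "\<dots> \<le> sum g (A \<inter> B)" using assms(4) by (intro sum_mono) auto
  also have "\<dots> \<le> sum g B" using assms(2,5) by (intro sum_mono2) auto
  finally show ?thesis .
qed

lemma bdd_above_image_iff_nat_bound:
  fixes f :: "'b \<Rightarrow> real"
  shows "bdd_above (f ` A) \<longleftrightarrow> (\<exists>B::nat. \<forall>n\<in>A. f n \<le> real B)"
proof
  assume "bdd_above (f ` A)"
  then obtain B where "\<And>n. n \<in> A \<Longrightarrow> f n \<le> B" unfolding bdd_above_def by auto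
  then show "\<exists>B::nat. \<forall>n\<in>A. f n \<le> real B"
    using real_nat_ceiling_ge[of B] by (intro exI[of _ "nat \<lceil>B\<rceil>"]) (auto intro: order_trans)
qed (auto simp: bdd_above_def)

lemma min_one_le_split:
  fixes x v z \<epsilon> :: real
  assumes \<epsilon>: "0 < \<epsilon>" and x: "x\<^sup>2 \<le> v + z"
  shows "min 1 x \<le> \<epsilon> + of_bool (\<epsilon>\<^sup>2 / 2 \<le> v) + (z / (\<epsilon>\<^sup>2 / 2))\<^sup>2"
proof (cases "x \<le> \<epsilon> \<or> \<epsilon>\<^sup>2 / 2 \<le> v")
  case True
  then have "min 1 x \<le> \<epsilon> + of_bool (\<epsilon>\<^sup>2 / 2 \<le> v)" using \<epsilon> by (auto simp: min_def)
  moreover have "0 \<le> (z / (\<epsilon>\<^sup>2 / 2))\<^sup>2" by simp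
  ultimately show ?thesis by linarith
next
  case False
  then have "\<epsilon>\<^sup>2 < x\<^sup>2" using \<epsilon> by (intro power_strict_mono) auto
  then have "1 < z / (\<epsilon>\<^sup>2 / 2)" using x False \<epsilon> by (simp add: field_simps)
  then have "1 < (z / (\<epsilon>\<^sup>2 / 2))\<^sup>2" by (simp add: one_less_power)
  then show ?thesis using False \<epsilon> by (auto simp: min_def)
qed

lemma borel_measurable_sum_from_one:
  fixes f :: "nat \<Rightarrow> 'a \<Rightarrow> real"
  assumes "\<And>n. 1 \<le> n \<Longrightarrow> f n \<in> borel_measurable M"
  shows "(\<lambda>\<omega>. \<Sum>n\<in>{1..k}. f n \<omega>) \<in> borel_measurable M"
  using assms by (intro borel_measurable_sum) auto

lemma (in prob_space) prob_tendsto_zero_sequentially: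
  assumes "\<And>i. A i \<in> events" and "AE \<omega> in M. \<forall>\<^sub>F i in sequentially. \<omega> \<notin> A i"
  shows "(\<lambda>i. prob (A i)) \<longlonglongrightarrow> 0"
proof -
  have "(\<lambda>i. \<integral>\<omega>. (indicator (A i) \<omega> :: real) \<partial>M) \<longlonglongrightarrow> (\<integral>\<omega>. 0 \<partial>M)"
  proof (rule integral_dominated_convergence[where w = "\<lambda>_. 1"])
    show "AE \<omega> in M. (\<lambda>i. indicator (A i) \<omega> :: real) \<longlonglongrightarrow> 0"
      using assms(2)
    proof eventually_elim
      case (elim \<omega>)
      then have "\<forall>\<^sub>F i in sequentially. indicator (A i) \<omega> = (0::real)"
        by (rule eventually_mono) simp
      then show ?case by (rule tendsto_eventually)
    qed
    show "\<And>i. AE \<omega> in M. norm (indicator (A i) \<omega> :: real) \<le> 1"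
      by (simp split: split_indicator)
  qed (use assms(1) in simp_all)
  then show ?thesis using assms(1) by (simp add: sets.Int_space_eq2)
qed

lemma (in prob_space) prob_tendsto_zero_at_top:
  fixes A :: "real \<Rightarrow> 'a set"
  assumes "\<And>t. A t \<in> events" and "AE \<omega> in M. \<forall>\<^sub>F t in at_top. \<omega> \<notin> A t"
  shows "((\<lambda>t. prob (A t)) \<longlongrightarrow> 0) at_top"
proof (rule tendsto_at_topI_sequentially)
  fix X :: "nat \<Rightarrow> real" assume X: "filterlim X at_top sequentially"
  have "AE \<omega> in M. \<forall>\<^sub>F n in sequentially. \<omega> \<notin> A (X n)"
    using assms(2) by eventually_elim (rule eventually_compose_filterlim[OF _ X])
  then show "(\<lambda>n. prob (A (X n))) \<longlonglongrightarrow> 0"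
    by (intro prob_tendsto_zero_sequentially assms(1))
qed

locale stochastic_approximation = prob_space M for M :: "'a measure" +
  fixes F :: "nat \<Rightarrow> 'a measure" and \<gamma> :: "nat \<Rightarrow> 'a \<Rightarrow> real"
    and \<theta>0 :: "'d::euclidean_space" and g :: "'d \<Rightarrow> 'd" and c :: real
    and \<Theta> :: "nat \<Rightarrow> 'a \<Rightarrow> 'd" and D :: "nat \<Rightarrow> 'a \<Rightarrow> 'd"
  assumes F_filtration: "filtration (space M) F"
    and F_subalgebra: "\<And>n. subalgebra M (F n)"
    and \<gamma>_predictable: "\<And>n. n \<ge> 1 \<Longrightarrow> \<gamma> n \<in> borel_measurable (F (n - 1))"
    and \<gamma>_limsup: "AE \<omega> in M. limsup (\<lambda>n. ereal (\<gamma> n \<omega>)) = 0"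
    and \<gamma>_diverges: "AE \<omega> in M. (\<Sum>n. ennreal \<bar>\<gamma> (Suc n) \<omega>\<bar>) = \<infinity>"
    and \<gamma>_decreasing: "\<And>n. n \<ge> 1 \<Longrightarrow> AE \<omega> in M. \<gamma> (Suc n) \<omega> \<le> \<gamma> n \<omega>"
    and g_locally_bounded: "\<And>x. \<exists>e>0. bounded (g ` ball x e)"
    and c_pos: "c > 0"
    and g_drift: "\<And>\<theta>. inner (\<theta> - \<theta>0) (g \<theta>) \<le> - c * (norm (\<theta> - \<theta>0))\<^sup>2"
    and \<Theta>_adapted: "\<And>n. \<Theta> n \<in> borel_measurable (F n)"
    and D_adapted: "\<And>n. n \<ge> 1 \<Longrightarrow> D n \<in> borel_measurable (F n)"
    and D_sup_sq_integrable: "(\<integral>\<^sup>+ \<omega>. (\<Squnion>n\<in>{1..}. ennreal ((norm (D n \<omega>))\<^sup>2)) \<partial>M) < \<infinity>"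
    and recursion: "\<And>n. n \<ge> 1 \<Longrightarrow> AE \<omega> in M.
           \<Theta> n \<omega> = \<Theta> (n - 1) \<omega> + \<gamma> n \<omega> *\<^sub>R g (\<Theta> (n - 1) \<omega>) + \<gamma> n \<omega> *\<^sub>R D n \<omega>"
    and D_martingale_difference: "\<And>n b. n \<ge> 1 \<Longrightarrow> b \<in> Basis \<Longrightarrow>
           AE \<omega> in M. real_cond_exp M (F (n - 1)) (\<lambda>\<omega>. inner (D n \<omega>) b) \<omega> = 0"
begin

lemma measurable_F_mono:
  assumes "n \<le> m" and "f \<in> measurable (F n) N"
  shows "f \<in> measurable (F m) N"
proof -
  have "subalgebra (F m) (F n)"
    unfolding subalgebra_def
    using filtration.space_F[OF F_filtration] filtration.sets_F_mono[OF F_filtration assms(1)] by auto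
  then show ?thesis using measurable_from_subalg assms(2) by blast
qed

lemma measurable_F_imp_M: "f \<in> measurable (F n) N \<Longrightarrow> f \<in> measurable M N"
  using measurable_from_subalg[OF F_subalgebra] by blast

lemma \<gamma>_measurable[measurable]: "n \<ge> 1 \<Longrightarrow> \<gamma> n \<in> borel_measurable M"
  using measurable_F_imp_M[OF \<gamma>_predictable] by blast

lemma \<Theta>_measurable[measurable]: "\<Theta> n \<in> borel_measurable M"
  using measurable_F_imp_M[OF \<Theta>_adapted] by blast

lemma D_measurable[measurable]: "n \<ge> 1 \<Longrightarrow> D n \<in> borel_measurable M"
  using measurable_F_imp_M[OF D_adapted] by blast

definition elapsed :: "nat \<Rightarrow> 'a \<Rightarrow> real" where
  "elapsed n \<omega> = (\<Sum>k\<in>{1..n}. \<gamma> k \<omega>)"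

lemma elapsed_0 [simp]: "elapsed 0 \<omega> = 0"
  by (simp add: elapsed_def)

lemma elapsed_Suc: "elapsed (Suc n) \<omega> = elapsed n \<omega> + \<gamma> (Suc n) \<omega>"
  by (simp add: elapsed_def)

lemma elapsed_predictable: "elapsed n \<in> borel_measurable (F (n - 1))"
  unfolding elapsed_def
proof (rule borel_measurable_sum)
  fix k assume "k \<in> {1..n}"
  then show "\<gamma> k \<in> borel_measurable (F (n - 1))"
    by (intro measurable_F_mono[OF _ \<gamma>_predictable]) auto
qed

lemma elapsed_measurable[measurable]: "elapsed n \<in> borel_measurable M"
  by (rule measurable_F_imp_M[OF elapsed_predictable])

definition noise_sup :: "'a \<Rightarrow> ennreal" where
  "noise_sup \<omega> = (\<Squnion>n\<in>{1..}. ennreal ((norm (D n \<omega>))\<^sup>2))"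

definition noise_bound :: "'a \<Rightarrow> real" where
  "noise_bound \<omega> = enn2real (noise_sup \<omega>)"

lemma noise_sup_measurable[measurable]: "noise_sup \<in> borel_measurable M"
  unfolding noise_sup_def by (rule borel_measurable_SUP) auto

lemma noise_bound_measurable[measurable]: "noise_bound \<in> borel_measurable M"
  unfolding noise_bound_def by measurable

lemma noise_bound_nonneg: "0 \<le> noise_bound \<omega>"
  by (simp add: noise_bound_def)

lemma AE_noise_sup_finite: "AE \<omega> in M. noise_sup \<omega> \<noteq> \<infinity>"
  using D_sup_sq_integrable unfolding noise_sup_def[symmetric]
  by (intro nn_integral_noteq_infinite) auto

lemma integrable_noise_bound: "integrable M noise_bound"
proof (rule integrableI_nn_integral_finite[where x = "enn2real (\<integral>\<^sup>+ \<omega>. noise_sup \<omega> \<partial>M)"])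
  have "(\<integral>\<^sup>+ \<omega>. ennreal (noise_bound \<omega>) \<partial>M) = (\<integral>\<^sup>+ \<omega>. noise_sup \<omega> \<partial>M)"
    using AE_noise_sup_finite by (intro nn_integral_cong_AE) (auto simp: noise_bound_def less_top)
  also have "\<dots> = ennreal (enn2real (\<integral>\<^sup>+ \<omega>. noise_sup \<omega> \<partial>M))"
    using D_sup_sq_integrable unfolding noise_sup_def[symmetric] by (simp add: ennreal_enn2real_if less_top)
  finally show "(\<integral>\<^sup>+ \<omega>. ennreal (noise_bound \<omega>) \<partial>M) = ennreal (enn2real (\<integral>\<^sup>+ \<omega>. noise_sup \<omega> \<partial>M))" .
qed (auto simp: noise_bound_nonneg)

definition regular :: "'a \<Rightarrow> bool" where
  "regular \<omega> \<longleftrightarrow>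
     (\<forall>n\<ge>1. \<Theta> n \<omega> = \<Theta> (n - 1) \<omega> + \<gamma> n \<omega> *\<^sub>R g (\<Theta> (n - 1) \<omega>) + \<gamma> n \<omega> *\<^sub>R D n \<omega>) \<and>
     (\<forall>n\<ge>1. \<gamma> (Suc n) \<omega> \<le> \<gamma> n \<omega>) \<and> limsup (\<lambda>n. ereal (\<gamma> n \<omega>)) = 0 \<and>
     (\<Sum>n. ennreal \<bar>\<gamma> (Suc n) \<omega>\<bar>) = \<infinity> \<and> noise_sup \<omega> \<noteq> \<infinity>"

lemma AE_regular: "AE \<omega> in M. regular \<omega>"
proof -
  have "AE \<omega> in M. \<forall>n. n \<ge> 1 \<longrightarrow>
      \<Theta> n \<omega> = \<Theta> (n - 1) \<omega> + \<gamma> n \<omega> *\<^sub>R g (\<Theta> (n - 1) \<omega>) + \<gamma> n \<omega> *\<^sub>R D n \<omega>"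
    unfolding AE_all_countable
  proof
    fix n :: nat
    show "AE \<omega> in M. n \<ge> 1 \<longrightarrow>
        \<Theta> n \<omega> = \<Theta> (n - 1) \<omega> + \<gamma> n \<omega> *\<^sub>R g (\<Theta> (n - 1) \<omega>) + \<gamma> n \<omega> *\<^sub>R D n \<omega>"
      using recursion[of n] by (cases "n \<ge> 1") auto
  qed
  moreover have "AE \<omega> in M. \<forall>n. n \<ge> 1 \<longrightarrow> \<gamma> (Suc n) \<omega> \<le> \<gamma> n \<omega>"
    unfolding AE_all_countable
  proof
    fix n :: nat
    show "AE \<omega> in M. n \<ge> 1 \<longrightarrow> \<gamma> (Suc n) \<omega> \<le> \<gamma> n \<omega>"
      using \<gamma>_decreasing[of n] by (cases "n \<ge> 1") auto
  qed
  ultimately show ?thesis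
    using \<gamma>_limsup \<gamma>_diverges AE_noise_sup_finite unfolding regular_def by eventually_elim auto
qed

lemma regular_recursion:
  "regular \<omega> \<Longrightarrow> n \<ge> 1 \<Longrightarrow>
     \<Theta> n \<omega> = \<Theta> (n - 1) \<omega> + \<gamma> n \<omega> *\<^sub>R g (\<Theta> (n - 1) \<omega>) + \<gamma> n \<omega> *\<^sub>R D n \<omega>"
  by (simp add: regular_def)

lemma regular_\<gamma>_decreasing: "regular \<omega> \<Longrightarrow> n \<ge> 1 \<Longrightarrow> \<gamma> (Suc n) \<omega> \<le> \<gamma> n \<omega>"
  by (simp add: regular_def)

lemma regular_\<gamma>_nonneg:
  assumes "regular \<omega>" and "n \<ge> 1"
  shows "0 \<le> \<gamma> n \<omega>"
proof -
  have "\<forall>\<^sub>F k in sequentially. ereal (\<gamma> k \<omega>) \<le> ereal (\<gamma> n \<omega>)"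
    unfolding eventually_sequentially
    using decreasing_from_one_le[of "\<lambda>k. \<gamma> k \<omega>" n] regular_\<gamma>_decreasing[OF assms(1)] assms(2) by auto
  then have "limsup (\<lambda>k. ereal (\<gamma> k \<omega>)) \<le> ereal (\<gamma> n \<omega>)" by (rule Limsup_bounded)
  then show ?thesis using assms(1) by (simp add: regular_def zero_ereal_def)
qed

lemma regular_\<gamma>_tendsto_zero:
  assumes "regular \<omega>"
  shows "(\<lambda>n. \<gamma> n \<omega>) \<longlonglongrightarrow> 0"
proof (rule order_tendstoI)
  fix e :: real assume "e < 0"
  then show "\<forall>\<^sub>F n in sequentially. e < \<gamma> n \<omega>"
    unfolding eventually_sequentially using regular_\<gamma>_nonneg[OF assms] by (intro exI[of _ 1]) force
next
  fix e :: real assume "0 < e"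
  then have "limsup (\<lambda>k. ereal (\<gamma> k \<omega>)) < ereal e" using assms by (simp add: regular_def)
  then have "\<forall>\<^sub>F n in sequentially. ereal (\<gamma> n \<omega>) < ereal e" by (rule Limsup_lessD)
  then show "\<forall>\<^sub>F n in sequentially. \<gamma> n \<omega> < e" by simp
qed

lemma regular_elapsed_mono:
  assumes "regular \<omega>" and "m \<le> n"
  shows "elapsed m \<omega> \<le> elapsed n \<omega>"
  using assms(2)
proof (induction n rule: dec_induct)
  case (step n)
  then show ?case using regular_\<gamma>_nonneg[OF assms(1), of "Suc n"] by (simp add: elapsed_Suc)
qed simp

lemma regular_elapsed_unbounded:
  assumes "regular \<omega>"
  shows "\<exists>n. B \<le> elapsed n \<omega>"
proof (rule ccontr)
  assume "\<not> (\<exists>n. B \<le> elapsed n \<omega>)"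
  then have less: "\<And>n. elapsed n \<omega> < B" by (simp add: not_le)
  have partial_sums: "(\<Sum>k<n. ennreal \<bar>\<gamma> (Suc k) \<omega>\<bar>) = ennreal (elapsed n \<omega>)" for n
  proof (induction n)
    case (Suc n)
    have "0 \<le> \<gamma> (Suc n) \<omega>" "0 \<le> elapsed n \<omega>"
      using regular_\<gamma>_nonneg[OF assms, of "Suc n"] regular_elapsed_mono[OF assms, of 0 n] by auto
    then show ?case using Suc.IH by (simp add: elapsed_Suc ennreal_plus)
  qed simp
  have "(\<Sum>n. ennreal \<bar>\<gamma> (Suc n) \<omega>\<bar>) = (SUP n. ennreal (elapsed n \<omega>))"
    unfolding suminf_eq_SUP partial_sums ..
  also have "\<dots> \<le> ennreal B" using less by (intro SUP_least ennreal_leI less_imp_le)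
  finally show False using assms by (simp add: regular_def top_unique)
qed

lemma norm_D_sq_le_noise_bound:
  assumes "regular \<omega>" and "n \<ge> 1"
  shows "(norm (D n \<omega>))\<^sup>2 \<le> noise_bound \<omega>"
proof -
  have "ennreal ((norm (D n \<omega>))\<^sup>2) \<le> noise_sup \<omega>"
    unfolding noise_sup_def using assms(2) by (intro SUP_upper) auto
  then have "enn2real (ennreal ((norm (D n \<omega>))\<^sup>2)) \<le> enn2real (noise_sup \<omega>)"
    using assms(1) by (intro enn2real_mono) (auto simp: regular_def less_top)
  then show ?thesis unfolding noise_bound_def by simp
qed

lemma norm_D_mult_le_noise_bound:
  assumes "regular \<omega>" and "n \<ge> 1" and "m \<ge> 1"
  shows "norm (D n \<omega>) * norm (D m \<omega>) \<le> noise_bound \<omega>"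
proof -
  have "norm (D n \<omega>) * norm (D m \<omega>) \<le> ((norm (D n \<omega>))\<^sup>2 + (norm (D m \<omega>))\<^sup>2) / 2"
    using sum_squares_bound[of "norm (D n \<omega>)" "norm (D m \<omega>)"] by (simp add: power2_eq_square)
  also have "\<dots> \<le> noise_bound \<omega>"
    using norm_D_sq_le_noise_bound[OF assms(1,2)] norm_D_sq_le_noise_bound[OF assms(1,3)] by simp
  finally show ?thesis .
qed

lemma sq_inner_D_le_noise_bound:
  assumes "regular \<omega>" and "n \<ge> 1"
  shows "(inner x (D n \<omega>))\<^sup>2 \<le> noise_bound \<omega> * (norm x)\<^sup>2"
proof -
  have "(inner x (D n \<omega>))\<^sup>2 \<le> (norm x * norm (D n \<omega>))\<^sup>2"
    using Cauchy_Schwarz_ineq2 by (metis abs_ge_zero power2_abs power_mono)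
  also have "\<dots> \<le> (norm x)\<^sup>2 * noise_bound \<omega>"
    using norm_D_sq_le_noise_bound[OF assms] by (simp add: power_mult_distrib mult_left_mono)
  finally show ?thesis by (simp add: mult_ac)
qed

lemma hit_index_eq_Least: "hit_index \<gamma> t \<omega> = (LEAST n. t \<le> elapsed n \<omega>)"
  unfolding hit_index_def elapsed_def Inf_nat_def by simp

lemma measurable_hit_index[measurable]: "(\<lambda>\<omega>. hit_index \<gamma> t \<omega>) \<in> measurable M (count_space UNIV)"
  unfolding hit_index_eq_Least by measurable

lemma hit_index_le: "t \<le> elapsed n \<omega> \<Longrightarrow> hit_index \<gamma> t \<omega> \<le> n"
  unfolding hit_index_eq_Least by (rule Least_le)

lemma le_elapsed_hit_index:
  assumes "regular \<omega>"
  shows "t \<le> elapsed (hit_index \<gamma> t \<omega>) \<omega>"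
proof -
  obtain n where "t \<le> elapsed n \<omega>" using regular_elapsed_unbounded[OF assms] by blast
  then show ?thesis unfolding hit_index_eq_Least by (rule LeastI)
qed

lemma less_hit_index_iff:
  assumes "regular \<omega>"
  shows "k < hit_index \<gamma> t \<omega> \<longleftrightarrow> elapsed k \<omega> < t"
proof
  assume "k < hit_index \<gamma> t \<omega>"
  then have "\<not> t \<le> elapsed k \<omega>" unfolding hit_index_eq_Least by (rule not_less_Least)
  then show "elapsed k \<omega> < t" by simp
next
  assume less: "elapsed k \<omega> < t"
  show "k < hit_index \<gamma> t \<omega>"
  proof (rule ccontr)
    assume "\<not> k < hit_index \<gamma> t \<omega>"
    then have "elapsed (hit_index \<gamma> t \<omega>) \<omega> \<le> elapsed k \<omega>"
      by (intro regular_elapsed_mono[OF assms]) simp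
    then show False using le_elapsed_hit_index[OF assms, of t] less by linarith
  qed
qed

lemma hit_index_pos: "regular \<omega> \<Longrightarrow> 0 < t \<Longrightarrow> 1 \<le> hit_index \<gamma> t \<omega>"
  using less_hit_index_iff[of \<omega> 0 t] by simp

lemma elapsed_hit_index_pred_less:
  assumes "regular \<omega>" and "0 < t"
  shows "elapsed (hit_index \<gamma> t \<omega> - 1) \<omega> < t"
  using less_hit_index_iff[OF assms(1), of "hit_index \<gamma> t \<omega> - 1" t] hit_index_pos[OF assms] by simp

lemma hit_index_bounds:
  assumes "regular \<omega>" and "0 < t"
  shows "1 \<le> hit_index \<gamma> t \<omega> \<and> sum (\<lambda>n. \<gamma> n \<omega>) {1..hit_index \<gamma> t \<omega> - 1} < t"
  using hit_index_pos[OF assms] elapsed_hit_index_pred_less[OF assms] by (simp add: elapsed_def)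

lemma discounted_sq_sum_hit_le:
  assumes "regular \<omega>" and "0 < a" and "0 < t"
  shows "discounted_sq_sum a (\<lambda>n. \<gamma> n \<omega>) (hit_index \<gamma> t \<omega>) t \<le> \<gamma> 1 \<omega> * exp (2 * a * \<gamma> 1 \<omega>) / a"
  using assms(2) regular_\<gamma>_nonneg[OF assms(1)] regular_\<gamma>_decreasing[OF assms(1)]
    hit_index_bounds[OF assms(1,3)]
  by (intro discounted_sq_sum_le) auto

lemma discounted_sq_sum_hit_tendsto_zero:
  assumes "regular \<omega>" and "0 < a"
  shows "((\<lambda>t. discounted_sq_sum a (\<lambda>n. \<gamma> n \<omega>) (hit_index \<gamma> t \<omega>) t) \<longlongrightarrow> 0) at_top"
  using assms(2) regular_\<gamma>_nonneg[OF assms(1)] regular_\<gamma>_decreasing[OF assms(1)]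
    regular_\<gamma>_tendsto_zero[OF assms(1)] hit_index_bounds[OF assms(1)]
  by (rule discounted_sq_sum_tendsto_zero)

lemma measurable_discounted_sq_sum_hit[measurable]:
  "(\<lambda>\<omega>. discounted_sq_sum a (\<lambda>n. \<gamma> n \<omega>) (hit_index \<gamma> t \<omega>) t) \<in> borel_measurable M"
proof -
  have "(\<lambda>\<omega>. \<Sum>n\<in>{1..k}. (\<gamma> n \<omega>)\<^sup>2 * exp (a * elapsed n \<omega>)) \<in> borel_measurable M" for k
    by (rule borel_measurable_sum_from_one) measurable
  then have "(\<lambda>\<omega>. discounted_sq_sum a (\<lambda>n. \<gamma> n \<omega>) k t) \<in> borel_measurable M" for k
    unfolding discounted_sq_sum_def elapsed_def[symmetric] by measurable
  from measurable_compose_countable[OF this measurable_hit_index] show ?thesis .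
qed

section \<open>Pathwise Lyapunov bound\<close>

definition err :: "nat \<Rightarrow> 'a \<Rightarrow> 'd" where
  "err n \<omega> = \<Theta> n \<omega> - \<theta>0"

definition weight :: "nat \<Rightarrow> 'a \<Rightarrow> real" where
  "weight n \<omega> = exp (2 * c * elapsed n \<omega>)"

definition g_bound :: "real \<Rightarrow> real" where
  "g_bound r = (SUP \<theta>\<in>cball 0 r. norm (g \<theta>))"

lemma norm_g_le_g_bound:
  assumes "norm \<theta> \<le> r"
  shows "norm (g \<theta>) \<le> g_bound r"
proof -
  have "bounded (g ` cball 0 r)"
    by (rule locally_bounded_imp_bounded_image[OF g_locally_bounded compact_cball])
  then have "bdd_above ((\<lambda>\<theta>. norm (g \<theta>)) ` cball 0 r)"
    unfolding bdd_above_norm[symmetric] by (simp add: image_image)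
  then show ?thesis using assms unfolding g_bound_def by (intro cSUP_upper) auto
qed

lemma norm_err_le: "norm (\<Theta> k \<omega>) \<le> j \<Longrightarrow> norm (err k \<omega>) \<le> \<bar>j\<bar> + norm \<theta>0"
  unfolding err_def using norm_triangle_ineq4[of "\<Theta> k \<omega>" \<theta>0] by linarith

lemma weight_pos: "0 < weight n \<omega>"
  by (simp add: weight_def)

lemma weight_step: "n \<ge> 1 \<Longrightarrow> weight n \<omega> * exp (- 2 * c * \<gamma> n \<omega>) = weight (n - 1) \<omega>"
  by (cases n) (auto simp: weight_def elapsed_Suc exp_add[symmetric] algebra_simps)

lemma discounted_sq_sum_eq_weight:
  "discounted_sq_sum (2 * c) (\<lambda>n. \<gamma> n \<omega>) N t = exp (- 2 * c * t) * (\<Sum>n\<in>{1..N}. (\<gamma> n \<omega>)\<^sup>2 * weight n \<omega>)"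
  by (simp add: discounted_sq_sum_def weight_def elapsed_def)

lemma weighted_err_step_le:
  assumes "regular \<omega>" and n: "n \<ge> 1"
  shows "weight n \<omega> * (norm (err n \<omega>))\<^sup>2 \<le> weight (n - 1) \<omega> * (norm (err (n - 1) \<omega>))\<^sup>2
     + (2 * \<gamma> n \<omega> * weight n \<omega> * inner (err (n - 1) \<omega>) (D n \<omega>)
        + 2 * (\<gamma> n \<omega>)\<^sup>2 * weight n \<omega> * ((norm (g (\<Theta> (n - 1) \<omega>)))\<^sup>2 + (norm (D n \<omega>))\<^sup>2))"
proof -
  have "err n \<omega> = err (n - 1) \<omega> + \<gamma> n \<omega> *\<^sub>R g (\<Theta> (n - 1) \<omega>) + \<gamma> n \<omega> *\<^sub>R D n \<omega>"
    using regular_recursion[OF assms] unfolding err_def by (simp add: algebra_simps)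
  then have "(norm (err n \<omega>))\<^sup>2 \<le> exp (- 2 * c * \<gamma> n \<omega>) * (norm (err (n - 1) \<omega>))\<^sup>2
      + 2 * \<gamma> n \<omega> * inner (err (n - 1) \<omega>) (D n \<omega>)
      + 2 * (\<gamma> n \<omega>)\<^sup>2 * ((norm (g (\<Theta> (n - 1) \<omega>)))\<^sup>2 + (norm (D n \<omega>))\<^sup>2)"
    using norm_sq_drift_step_le[OF regular_\<gamma>_nonneg[OF assms] g_drift[of "\<Theta> (n - 1) \<omega>", folded err_def]]
    by simp
  then have "weight n \<omega> * (norm (err n \<omega>))\<^sup>2 \<le> weight n \<omega> * (exp (- 2 * c * \<gamma> n \<omega>) * (norm (err (n - 1) \<omega>))\<^sup>2
      + 2 * \<gamma> n \<omega> * inner (err (n - 1) \<omega>) (D n \<omega>)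
      + 2 * (\<gamma> n \<omega>)\<^sup>2 * ((norm (g (\<Theta> (n - 1) \<omega>)))\<^sup>2 + (norm (D n \<omega>))\<^sup>2))"
    by (rule mult_left_mono) (simp add: less_imp_le weight_pos)
  also have "\<dots> = weight n \<omega> * exp (- 2 * c * \<gamma> n \<omega>) * (norm (err (n - 1) \<omega>))\<^sup>2
      + (2 * \<gamma> n \<omega> * weight n \<omega> * inner (err (n - 1) \<omega>) (D n \<omega>)
        + 2 * (\<gamma> n \<omega>)\<^sup>2 * weight n \<omega> * ((norm (g (\<Theta> (n - 1) \<omega>)))\<^sup>2 + (norm (D n \<omega>))\<^sup>2))"
    by (simp add: distrib_left mult_ac)
  finally show ?thesis unfolding weight_step[OF n] .
qed

definition confined :: "real \<Rightarrow> 'a \<Rightarrow> bool" where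
  "confined j \<omega> \<longleftrightarrow> (\<forall>k. norm (\<Theta> k \<omega>) \<le> j) \<and> \<gamma> 1 \<omega> \<le> j"

text \<open>
  The first conjunct says \<open>n \<le> N\<^sub>t\<close>. The last three hold on regular confined paths anyway;
  they make \<open>coeff\<close> bounded everywhere, not just almost surely.
\<close>
definition active :: "real \<Rightarrow> real \<Rightarrow> nat \<Rightarrow> 'a \<Rightarrow> bool" where
  "active j t n \<omega> \<longleftrightarrow> elapsed (n - 1) \<omega> < t \<and> norm (\<Theta> (n - 1) \<omega>) \<le> j
     \<and> 0 \<le> \<gamma> n \<omega> \<and> \<gamma> n \<omega> \<le> \<gamma> 1 \<omega> \<and> \<gamma> 1 \<omega> \<le> j"

definition coeff :: "real \<Rightarrow> real \<Rightarrow> nat \<Rightarrow> 'a \<Rightarrow> 'd" where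
  "coeff j t n \<omega> = (if active j t n \<omega> then 2 * \<gamma> n \<omega> * weight n \<omega> else 0) *\<^sub>R err (n - 1) \<omega>"

definition martingale_term :: "real \<Rightarrow> real \<Rightarrow> nat \<Rightarrow> 'a \<Rightarrow> real" where
  "martingale_term j t n0 \<omega> = exp (- 2 * c * t) * (\<Sum>n\<in>{1..n0}. inner (coeff j t n \<omega>) (D n \<omega>))"

definition drift_term :: "real \<Rightarrow> real \<Rightarrow> 'a \<Rightarrow> real" where
  "drift_term j t \<omega> = exp (- 2 * c * t) * (norm (err 0 \<omega>))\<^sup>2
     + 2 * ((g_bound j)\<^sup>2 + noise_bound \<omega>) * discounted_sq_sum (2 * c) (\<lambda>n. \<gamma> n \<omega>) (hit_index \<gamma> t \<omega>) t"

lemma norm_coeff: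
  "norm (coeff j t n \<omega>) = (if active j t n \<omega> then 2 * \<gamma> n \<omega> * weight n \<omega> * norm (err (n - 1) \<omega>) else 0)"
  unfolding coeff_def active_def using weight_pos[of n \<omega>] by (auto simp: abs_mult)

lemma sum_inner_coeff_eq:
  assumes "regular \<omega>" and "confined j \<omega>" and "hit_index \<gamma> t \<omega> \<le> n0"
  shows "(\<Sum>n\<in>{1..n0}. inner (coeff j t n \<omega>) (D n \<omega>))
    = (\<Sum>n\<in>{1..hit_index \<gamma> t \<omega>}. 2 * \<gamma> n \<omega> * weight n \<omega> * inner (err (n - 1) \<omega>) (D n \<omega>))"
proof -
  define N where "N = hit_index \<gamma> t \<omega>"
  have before: "inner (coeff j t n \<omega>) (D n \<omega>) = 2 * \<gamma> n \<omega> * weight n \<omega> * inner (err (n - 1) \<omega>) (D n \<omega>)"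
    if n: "n \<in> {1..N}" for n
  proof -
    have "elapsed (n - 1) \<omega> < t"
      using n less_hit_index_iff[OF assms(1), of "n - 1" t] unfolding N_def by auto
    moreover have "norm (\<Theta> (n - 1) \<omega>) \<le> j" and "\<gamma> 1 \<omega> \<le> j"
      using assms(2) by (auto simp: confined_def)
    moreover have "0 \<le> \<gamma> n \<omega>" using regular_\<gamma>_nonneg[OF assms(1)] n by auto
    moreover have "\<gamma> n \<omega> \<le> \<gamma> 1 \<omega>"
      using decreasing_from_one_le[of "\<lambda>k. \<gamma> k \<omega>" 1 n] regular_\<gamma>_decreasing[OF assms(1)] n by auto
    ultimately have "active j t n \<omega>" unfolding active_def by blast
    then show ?thesis unfolding coeff_def by (simp add: mult_ac)
  qed
  have after: "inner (coeff j t n \<omega>) (D n \<omega>) = 0" if n: "n \<in> {N<..n0}" for n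
  proof -
    have "\<not> elapsed (n - 1) \<omega> < t"
      using n less_hit_index_iff[OF assms(1), of "n - 1" t] unfolding N_def by auto
    then show ?thesis unfolding coeff_def active_def by simp
  qed
  have "{1..n0} = {1..N} \<union> {N<..n0}" using assms(3) unfolding N_def by auto
  then have "(\<Sum>n\<in>{1..n0}. inner (coeff j t n \<omega>) (D n \<omega>))
      = (\<Sum>n\<in>{1..N}. inner (coeff j t n \<omega>) (D n \<omega>)) + (\<Sum>n\<in>{N<..n0}. inner (coeff j t n \<omega>) (D n \<omega>))"
    by (simp add: sum.union_disjoint ivl_disj_int)
  then show ?thesis using before after unfolding N_def by simp
qed

lemma sum_drift_increments_le:
  assumes "regular \<omega>" and "confined j \<omega>"
  shows "(\<Sum>n\<in>{1..N}. 2 * (\<gamma> n \<omega>)\<^sup>2 * weight n \<omega> * ((norm (g (\<Theta> (n - 1) \<omega>)))\<^sup>2 + (norm (D n \<omega>))\<^sup>2))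
    \<le> 2 * ((g_bound j)\<^sup>2 + noise_bound \<omega>) * (\<Sum>n\<in>{1..N}. (\<gamma> n \<omega>)\<^sup>2 * weight n \<omega>)"
  unfolding sum_distrib_left
proof (rule sum_mono)
  fix n assume n: "n \<in> {1..N}"
  have "norm (g (\<Theta> (n - 1) \<omega>)) \<le> g_bound j"
    using assms(2) by (intro norm_g_le_g_bound) (simp add: confined_def)
  then have "(norm (g (\<Theta> (n - 1) \<omega>)))\<^sup>2 + (norm (D n \<omega>))\<^sup>2 \<le> (g_bound j)\<^sup>2 + noise_bound \<omega>"
    using norm_D_sq_le_noise_bound[OF assms(1), of n] n by (intro add_mono power_mono) auto
  moreover have "0 \<le> 2 * (\<gamma> n \<omega>)\<^sup>2 * weight n \<omega>" using weight_pos[of n \<omega>] by simp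
  ultimately have "2 * (\<gamma> n \<omega>)\<^sup>2 * weight n \<omega> * ((norm (g (\<Theta> (n - 1) \<omega>)))\<^sup>2 + (norm (D n \<omega>))\<^sup>2)
      \<le> 2 * (\<gamma> n \<omega>)\<^sup>2 * weight n \<omega> * ((g_bound j)\<^sup>2 + noise_bound \<omega>)"
    by (rule mult_left_mono)
  then show "2 * (\<gamma> n \<omega>)\<^sup>2 * weight n \<omega> * ((norm (g (\<Theta> (n - 1) \<omega>)))\<^sup>2 + (norm (D n \<omega>))\<^sup>2)
      \<le> 2 * ((g_bound j)\<^sup>2 + noise_bound \<omega>) * ((\<gamma> n \<omega>)\<^sup>2 * weight n \<omega>)"
    by (simp only: ac_simps)
qed

text \<open>
  The weight at the hitting index is at least \<open>exp (2 c t)\<close>, so dividing the telescoped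
  one-step inequality by it leaves a pathwise vanishing drift term plus a martingale term.
\<close>
lemma sq_norm_err_hit_le:
  assumes "regular \<omega>" and "confined j \<omega>" and "hit_index \<gamma> t \<omega> \<le> n0"
  shows "(norm (err (hit_index \<gamma> t \<omega>) \<omega>))\<^sup>2 \<le> drift_term j t \<omega> + martingale_term j t n0 \<omega>"
proof -
  define N where "N = hit_index \<gamma> t \<omega>"
  define A where "A n = 2 * \<gamma> n \<omega> * weight n \<omega> * inner (err (n - 1) \<omega>) (D n \<omega>)" for n
  define B where "B n = 2 * (\<gamma> n \<omega>)\<^sup>2 * weight n \<omega> * ((norm (g (\<Theta> (n - 1) \<omega>)))\<^sup>2 + (norm (D n \<omega>))\<^sup>2)" for n
  define R where "R = (norm (err 0 \<omega>))\<^sup>2 + (\<Sum>n\<in>{1..n0}. inner (coeff j t n \<omega>) (D n \<omega>))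
      + 2 * ((g_bound j)\<^sup>2 + noise_bound \<omega>) * (\<Sum>n\<in>{1..N}. (\<gamma> n \<omega>)\<^sup>2 * weight n \<omega>)"
  have "weight N \<omega> * (norm (err N \<omega>))\<^sup>2 \<le> weight 0 \<omega> * (norm (err 0 \<omega>))\<^sup>2 + (\<Sum>n\<in>{1..N}. A n + B n)"
    by (rule le_telescoping_sum) (unfold A_def B_def, rule weighted_err_step_le[OF assms(1)], simp)
  also have "(\<Sum>n\<in>{1..N}. A n + B n) = (\<Sum>n\<in>{1..n0}. inner (coeff j t n \<omega>) (D n \<omega>)) + (\<Sum>n\<in>{1..N}. B n)"
    unfolding sum.distrib A_def N_def using sum_inner_coeff_eq[OF assms] by simp
  also have "(\<Sum>n\<in>{1..N}. B n) \<le> 2 * ((g_bound j)\<^sup>2 + noise_bound \<omega>) * (\<Sum>n\<in>{1..N}. (\<gamma> n \<omega>)\<^sup>2 * weight n \<omega>)"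
    unfolding B_def by (rule sum_drift_increments_le[OF assms(1,2)])
  finally have telescoped: "weight N \<omega> * (norm (err N \<omega>))\<^sup>2 \<le> R"
    unfolding R_def by (simp add: weight_def add.assoc)
  have "1 \<le> exp (2 * c * (elapsed N \<omega> - t))"
    using le_elapsed_hit_index[OF assms(1), of t] c_pos unfolding N_def by simp
  also have "\<dots> = exp (- 2 * c * t) * weight N \<omega>"
    unfolding weight_def by (simp add: exp_add[symmetric] algebra_simps)
  finally have "(norm (err N \<omega>))\<^sup>2 \<le> exp (- 2 * c * t) * weight N \<omega> * (norm (err N \<omega>))\<^sup>2"
    using mult_right_mono[of 1 _ "(norm (err N \<omega>))\<^sup>2"] by simp
  also have "\<dots> \<le> exp (- 2 * c * t) * R"
    unfolding mult.assoc using telescoped by (rule mult_left_mono) simp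
  also have "\<dots> = drift_term j t \<omega> + martingale_term j t n0 \<omega>"
    unfolding R_def drift_term_def martingale_term_def discounted_sq_sum_eq_weight N_def
    by (simp add: algebra_simps)
  finally show ?thesis unfolding N_def .
qed

section \<open>The martingale term\<close>

lemma sigma_finite_subalgebra_F: "sigma_finite_subalgebra M (F n)"
proof -
  have "finite_measure (restr_to_subalg M (F n))"
    using finite_measure_restr_to_subalg F_subalgebra finite_emeasure_space finite_measureI
    unfolding infinity_ennreal_def by blast
  then show ?thesis
    unfolding sigma_finite_subalgebra_def finite_measure_def using F_subalgebra by simp
qed

lemma integrable_mult_inner_Basis_D:
  fixes f :: "'a \<Rightarrow> real" and H :: "'a \<Rightarrow> 'd"
  assumes b: "b \<in> Basis" and H_bound: "\<And>\<omega>. norm (H \<omega>) \<le> C"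
    and integrable_f: "integrable M (\<lambda>\<omega>. \<bar>f \<omega>\<bar> * norm (D n \<omega>))"
    and [measurable]: "f \<in> borel_measurable M" "H \<in> borel_measurable M" "D n \<in> borel_measurable M"
  shows "integrable M (\<lambda>\<omega>. (f \<omega> * inner (H \<omega>) b) * inner (D n \<omega>) b)"
proof (rule Bochner_Integration.integrable_bound)
  have C: "0 \<le> C" using norm_ge_zero[of "H undefined"] H_bound[of undefined] by linarith
  show "integrable M (\<lambda>\<omega>. C * (\<bar>f \<omega>\<bar> * norm (D n \<omega>)))" using integrable_f by simp
  show "AE \<omega> in M. norm ((f \<omega> * inner (H \<omega>) b) * inner (D n \<omega>) b) \<le> norm (C * (\<bar>f \<omega>\<bar> * norm (D n \<omega>)))"
  proof (intro AE_I2)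
    fix \<omega>
    have "\<bar>inner (H \<omega>) b\<bar> \<le> C" "\<bar>inner (D n \<omega>) b\<bar> \<le> norm (D n \<omega>)"
      using Cauchy_Schwarz_ineq2[of "H \<omega>" b] Cauchy_Schwarz_ineq2[of "D n \<omega>" b] H_bound[of \<omega>] b by auto
    then have "\<bar>f \<omega>\<bar> * (\<bar>inner (H \<omega>) b\<bar> * \<bar>inner (D n \<omega>) b\<bar>) \<le> \<bar>f \<omega>\<bar> * (C * norm (D n \<omega>))"
      using C by (intro mult_left_mono mult_mono) auto
    then show "norm ((f \<omega> * inner (H \<omega>) b) * inner (D n \<omega>) b) \<le> norm (C * (\<bar>f \<omega>\<bar> * norm (D n \<omega>)))"
      using C by (simp add: abs_mult mult_ac)
  qed
qed measurable

text \<open>Tested coordinatewise against the hypothesis on the conditional expectations of \<open>D\<^sub>n \<bullet> b\<close>.\<close>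
lemma integral_predictable_mult_inner_D:
  fixes f :: "'a \<Rightarrow> real" and H :: "'a \<Rightarrow> 'd"
  assumes n: "n \<ge> 1" and f: "f \<in> borel_measurable (F (n - 1))" and H: "H \<in> borel_measurable (F (n - 1))"
    and H_bound: "\<And>\<omega>. norm (H \<omega>) \<le> C"
    and integrable_f: "integrable M (\<lambda>\<omega>. \<bar>f \<omega>\<bar> * norm (D n \<omega>))"
  shows "integrable M (\<lambda>\<omega>. f \<omega> * inner (H \<omega>) (D n \<omega>))"
    and "(\<integral>\<omega>. f \<omega> * inner (H \<omega>) (D n \<omega>) \<partial>M) = 0"
proof -
  have [measurable]: "f \<in> borel_measurable M" "H \<in> borel_measurable M" "D n \<in> borel_measurable M"
    using measurable_F_imp_M[OF f] measurable_F_imp_M[OF H] D_measurable[OF n] by auto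
  have coordinates: "f \<omega> * inner (H \<omega>) (D n \<omega>) = (\<Sum>b\<in>Basis. (f \<omega> * inner (H \<omega>) b) * inner (D n \<omega>) b)" for \<omega>
    using euclidean_inner[of "H \<omega>" "D n \<omega>"] by (simp add: sum_distrib_left mult.assoc)
  have integrable_b: "integrable M (\<lambda>\<omega>. (f \<omega> * inner (H \<omega>) b) * inner (D n \<omega>) b)" if "b \<in> Basis" for b
    using that H_bound integrable_f by (rule integrable_mult_inner_Basis_D) measurable
  have integral_b: "(\<integral>\<omega>. (f \<omega> * inner (H \<omega>) b) * inner (D n \<omega>) b \<partial>M) = 0" if b: "b \<in> Basis" for b
  proof -
    interpret sigma_finite_subalgebra M "F (n - 1)" by (rule sigma_finite_subalgebra_F)
    have fH: "(\<lambda>\<omega>. f \<omega> * inner (H \<omega>) b) \<in> borel_measurable (F (n - 1))" using f H by measurable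
    have "(\<integral>\<omega>. (f \<omega> * inner (H \<omega>) b) * inner (D n \<omega>) b \<partial>M)
        = (\<integral>\<omega>. (f \<omega> * inner (H \<omega>) b) * real_cond_exp M (F (n - 1)) (\<lambda>\<omega>. inner (D n \<omega>) b) \<omega> \<partial>M)"
      by (rule real_cond_exp_intg(2)[symmetric, OF integrable_b[OF b] fH]) measurable
    also have "\<dots> = (\<integral>\<omega>. 0 \<partial>M)"
      using D_martingale_difference[OF n b] by (intro integral_cong_AE) auto
    finally show ?thesis by simp
  qed
  show "integrable M (\<lambda>\<omega>. f \<omega> * inner (H \<omega>) (D n \<omega>))"
    unfolding coordinates using integrable_b by (intro Bochner_Integration.integrable_sum) auto
  show "(\<integral>\<omega>. f \<omega> * inner (H \<omega>) (D n \<omega>) \<partial>M) = 0"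
    unfolding coordinates using integrable_b integral_b by (subst Bochner_Integration.integral_sum) auto
qed

lemma integrable_sq_inner_D:
  assumes "n \<ge> 1" and [measurable]: "H \<in> borel_measurable M" and H_bound: "\<And>\<omega>. norm (H \<omega>) \<le> C"
  shows "integrable M (\<lambda>\<omega>. (inner (H \<omega>) (D n \<omega>))\<^sup>2)"
proof (rule Bochner_Integration.integrable_bound)
  show "integrable M (\<lambda>\<omega>. C\<^sup>2 * noise_bound \<omega>)" using integrable_noise_bound by simp
  show "AE \<omega> in M. norm ((inner (H \<omega>) (D n \<omega>))\<^sup>2) \<le> norm (C\<^sup>2 * noise_bound \<omega>)"
    using AE_regular
  proof eventually_elim
    case (elim \<omega>)
    have "(inner (H \<omega>) (D n \<omega>))\<^sup>2 \<le> noise_bound \<omega> * (norm (H \<omega>))\<^sup>2"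
      by (rule sq_inner_D_le_noise_bound[OF elim assms(1)])
    also have "\<dots> \<le> noise_bound \<omega> * C\<^sup>2"
      using H_bound[of \<omega>] noise_bound_nonneg[of \<omega>] by (intro mult_left_mono power_mono) auto
    finally show ?case using noise_bound_nonneg[of \<omega>] by (simp add: mult.commute)
  qed
qed (use assms(1) in measurable)

lemma integrable_sum_inner_D_mult_norm_D:
  fixes H :: "nat \<Rightarrow> 'a \<Rightarrow> 'd"
  assumes H: "\<And>n. n \<ge> 1 \<Longrightarrow> H n \<in> borel_measurable M" and H_bound: "\<And>n \<omega>. norm (H n \<omega>) \<le> C"
    and m: "m \<ge> 1"
  shows "integrable M (\<lambda>\<omega>. \<bar>\<Sum>n\<in>{1..N}. inner (H n \<omega>) (D n \<omega>)\<bar> * norm (D m \<omega>))"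
proof (rule Bochner_Integration.integrable_bound)
  have C: "0 \<le> C" using norm_ge_zero[of "H 0 undefined"] H_bound[of 0 undefined] by linarith
  show "integrable M (\<lambda>\<omega>. C * real N * noise_bound \<omega>)" using integrable_noise_bound by simp
  show "AE \<omega> in M. norm (\<bar>\<Sum>n\<in>{1..N}. inner (H n \<omega>) (D n \<omega>)\<bar> * norm (D m \<omega>)) \<le> norm (C * real N * noise_bound \<omega>)"
    using AE_regular
  proof eventually_elim
    case (elim \<omega>)
    have "\<bar>\<Sum>n\<in>{1..N}. inner (H n \<omega>) (D n \<omega>)\<bar> * norm (D m \<omega>)
        \<le> (\<Sum>n\<in>{1..N}. C * (norm (D n \<omega>) * norm (D m \<omega>)))"
    proof -
      have "\<bar>inner (H n \<omega>) (D n \<omega>)\<bar> \<le> C * norm (D n \<omega>)" for n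
        using Cauchy_Schwarz_ineq2[of "H n \<omega>" "D n \<omega>"]
          mult_right_mono[OF H_bound[of n \<omega>] norm_ge_zero[of "D n \<omega>"]] by linarith
      then have "\<bar>\<Sum>n\<in>{1..N}. inner (H n \<omega>) (D n \<omega>)\<bar> \<le> (\<Sum>n\<in>{1..N}. C * norm (D n \<omega>))"
        by (intro order_trans[OF sum_abs] sum_mono)
      from mult_right_mono[OF this norm_ge_zero[of "D m \<omega>"]] show ?thesis
        by (simp add: sum_distrib_right mult.assoc)
    qed
    also have "\<dots> \<le> (\<Sum>n\<in>{1..N}. C * noise_bound \<omega>)"
      using norm_D_mult_le_noise_bound[OF elim _ m] C by (intro sum_mono mult_left_mono) auto
    finally show ?case using C noise_bound_nonneg[of \<omega>] by (simp add: mult_ac)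
  qed
  have [measurable]: "(\<lambda>\<omega>. \<Sum>n\<in>{1..N}. inner (H n \<omega>) (D n \<omega>)) \<in> borel_measurable M"
    by (rule borel_measurable_sum_from_one, rule borel_measurable_inner) (simp_all add: H)
  show "(\<lambda>\<omega>. \<bar>\<Sum>n\<in>{1..N}. inner (H n \<omega>) (D n \<omega>)\<bar> * norm (D m \<omega>)) \<in> borel_measurable M"
    using m by measurable
qed

lemma sq_sum_inner_D_isometry:
  fixes H :: "nat \<Rightarrow> 'a \<Rightarrow> 'd"
  assumes H: "\<And>n. n \<ge> 1 \<Longrightarrow> H n \<in> borel_measurable (F (n - 1))"
    and H_bound: "\<And>n \<omega>. norm (H n \<omega>) \<le> C"
  shows "integrable M (\<lambda>\<omega>. (\<Sum>n\<in>{1..N}. inner (H n \<omega>) (D n \<omega>))\<^sup>2) \<and>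
    (\<integral>\<omega>. (\<Sum>n\<in>{1..N}. inner (H n \<omega>) (D n \<omega>))\<^sup>2 \<partial>M) = (\<Sum>n\<in>{1..N}. \<integral>\<omega>. (inner (H n \<omega>) (D n \<omega>))\<^sup>2 \<partial>M)"
proof (induction N)
  case (Suc N)
  have H_M [measurable]: "n \<ge> 1 \<Longrightarrow> H n \<in> borel_measurable M" for n
    using measurable_F_imp_M[OF H] by blast
  define P where "P \<omega> = (\<Sum>n\<in>{1..N}. inner (H n \<omega>) (D n \<omega>))" for \<omega>
  define Y where "Y \<omega> = inner (H (Suc N) \<omega>) (D (Suc N) \<omega>)" for \<omega>
  have "P \<in> borel_measurable (F N)"
    unfolding P_def
  proof (rule borel_measurable_sum)
    fix n assume "n \<in> {1..N}"
    then show "(\<lambda>\<omega>. inner (H n \<omega>) (D n \<omega>)) \<in> borel_measurable (F N)"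
      using measurable_F_mono[OF _ H[of n], of N] measurable_F_mono[OF _ D_adapted[of n], of N]
      by (intro borel_measurable_inner) auto
  qed
  moreover have "integrable M (\<lambda>\<omega>. \<bar>P \<omega>\<bar> * norm (D (Suc N) \<omega>))"
    unfolding P_def by (rule integrable_sum_inner_D_mult_norm_D) (use H_M H_bound in auto)
  ultimately have cross: "integrable M (\<lambda>\<omega>. P \<omega> * Y \<omega>)" "(\<integral>\<omega>. P \<omega> * Y \<omega> \<partial>M) = 0"
    using integral_predictable_mult_inner_D[of "Suc N" P "H (Suc N)" C] H[of "Suc N"] H_bound
    unfolding Y_def by auto
  have Y: "integrable M (\<lambda>\<omega>. (Y \<omega>)\<^sup>2)"
    unfolding Y_def by (rule integrable_sq_inner_D[OF _ H_M H_bound]) simp_all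
  have P: "integrable M (\<lambda>\<omega>. (P \<omega>)\<^sup>2)"
    and integral_P: "(\<integral>\<omega>. (P \<omega>)\<^sup>2 \<partial>M) = (\<Sum>n\<in>{1..N}. \<integral>\<omega>. (inner (H n \<omega>) (D n \<omega>))\<^sup>2 \<partial>M)"
    using Suc.IH unfolding P_def by auto
  have expand: "(\<Sum>n\<in>{1..Suc N}. inner (H n \<omega>) (D n \<omega>))\<^sup>2 = (P \<omega>)\<^sup>2 + 2 * (P \<omega> * Y \<omega>) + (Y \<omega>)\<^sup>2" for \<omega>
    unfolding P_def Y_def by (simp add: power2_sum mult.assoc)
  have "(\<integral>\<omega>. (P \<omega>)\<^sup>2 + 2 * (P \<omega> * Y \<omega>) + (Y \<omega>)\<^sup>2 \<partial>M)
      = (\<integral>\<omega>. (P \<omega>)\<^sup>2 \<partial>M) + 2 * (\<integral>\<omega>. P \<omega> * Y \<omega> \<partial>M) + (\<integral>\<omega>. (Y \<omega>)\<^sup>2 \<partial>M)"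
    using P cross(1) Y by simp
  also have "\<dots> = (\<Sum>n\<in>{1..Suc N}. \<integral>\<omega>. (inner (H n \<omega>) (D n \<omega>))\<^sup>2 \<partial>M)"
    unfolding integral_P cross(2) by (simp add: Y_def)
  finally show ?case unfolding expand using P cross(1) Y by simp
qed simp

lemma coeff_predictable: "n \<ge> 1 \<Longrightarrow> coeff j t n \<in> borel_measurable (F (n - 1))"
proof -
  assume n: "n \<ge> 1"
  have [measurable]: "elapsed (n - 1) \<in> borel_measurable (F (n - 1))"
    using measurable_F_mono[OF _ elapsed_predictable] by simp
  have [measurable]: "weight n \<in> borel_measurable (F (n - 1))"
    unfolding weight_def using elapsed_predictable[of n] by measurable
  have [measurable]: "\<gamma> n \<in> borel_measurable (F (n - 1))" "\<gamma> 1 \<in> borel_measurable (F (n - 1))"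
    using \<gamma>_predictable[OF n] measurable_F_mono[OF _ \<gamma>_predictable[of 1]] by auto
  have [measurable]: "\<Theta> (n - 1) \<in> borel_measurable (F (n - 1))" by (rule \<Theta>_adapted)
  show ?thesis unfolding coeff_def active_def err_def by measurable
qed

lemma coeff_measurable[measurable]: "n \<ge> 1 \<Longrightarrow> coeff j t n \<in> borel_measurable M"
  using measurable_F_imp_M[OF coeff_predictable] by blast

lemma norm_coeff_le: "norm (coeff j t n \<omega>) \<le> 2 * \<bar>j\<bar> * exp (2 * c * (t + \<bar>j\<bar>)) * (\<bar>j\<bar> + norm \<theta>0)"
proof (cases "active j t n \<omega>")
  case True
  then have "0 \<le> \<gamma> n \<omega>" "\<gamma> n \<omega> \<le> \<bar>j\<bar>" "elapsed (n - 1) \<omega> < t"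
    and "norm (err (n - 1) \<omega>) \<le> \<bar>j\<bar> + norm \<theta>0"
    using norm_err_le[of "n - 1" \<omega> j] unfolding active_def by auto
  moreover have "elapsed n \<omega> \<le> elapsed (n - 1) \<omega> + \<gamma> n \<omega>"
    using \<open>0 \<le> \<gamma> n \<omega>\<close> by (cases n) (simp_all add: elapsed_Suc)
  ultimately have "weight n \<omega> \<le> exp (2 * c * (t + \<bar>j\<bar>))"
    unfolding weight_def using c_pos by simp
  with \<open>0 \<le> \<gamma> n \<omega>\<close> \<open>\<gamma> n \<omega> \<le> \<bar>j\<bar>\<close> \<open>norm (err (n - 1) \<omega>) \<le> \<bar>j\<bar> + norm \<theta>0\<close> show ?thesis
    using True weight_pos[of n \<omega>] unfolding norm_coeff by (simp add: mult_mono)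
qed (simp add: norm_coeff)

definition martingale_weight :: "real \<Rightarrow> real \<Rightarrow> 'a \<Rightarrow> real" where
  "martingale_weight j t \<omega> =
     (if \<gamma> 1 \<omega> \<le> j then discounted_sq_sum (4 * c) (\<lambda>n. \<gamma> n \<omega>) (hit_index \<gamma> t \<omega>) t else 0)"

lemma martingale_weight_measurable[measurable]: "martingale_weight j t \<in> borel_measurable M"
  unfolding martingale_weight_def by measurable

lemma martingale_weight_nonneg: "0 \<le> martingale_weight j t \<omega>"
  by (simp add: martingale_weight_def discounted_sq_sum_nonneg)

lemma martingale_weight_le:
  assumes "regular \<omega>" and "0 < t"
  shows "martingale_weight j t \<omega> \<le> \<bar>j\<bar> * exp (8 * c * \<bar>j\<bar>) / (4 * c)"
proof (cases "\<gamma> 1 \<omega> \<le> j")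
  case True
  have "0 \<le> \<gamma> 1 \<omega>" using regular_\<gamma>_nonneg[OF assms(1)] by simp
  then have "\<gamma> 1 \<omega> * exp (2 * (4 * c) * \<gamma> 1 \<omega>) \<le> \<bar>j\<bar> * exp (8 * c * \<bar>j\<bar>)"
    using True c_pos by (intro mult_mono) auto
  then have "\<gamma> 1 \<omega> * exp (2 * (4 * c) * \<gamma> 1 \<omega>) / (4 * c) \<le> \<bar>j\<bar> * exp (8 * c * \<bar>j\<bar>) / (4 * c)"
    using c_pos by (simp add: divide_right_mono)
  with True show ?thesis
    using discounted_sq_sum_hit_le[OF assms(1) _ assms(2), of "4 * c"] c_pos
    unfolding martingale_weight_def by simp
qed (use c_pos in \<open>simp add: martingale_weight_def\<close>)

lemma noise_bound_mult_martingale_weight_le: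
  assumes "regular \<omega>" and "0 < t"
  shows "norm (noise_bound \<omega> * martingale_weight j t \<omega>) \<le> \<bar>j\<bar> * exp (8 * c * \<bar>j\<bar>) / (4 * c) * noise_bound \<omega>"
  using mult_left_mono[OF martingale_weight_le[OF assms, of j] noise_bound_nonneg[of \<omega>]]
    noise_bound_nonneg[of \<omega>] martingale_weight_nonneg[of j t \<omega>]
  by (simp add: abs_mult mult_ac)

lemma integrable_noise_bound_mult_martingale_weight:
  assumes "0 < t"
  shows "integrable M (\<lambda>\<omega>. noise_bound \<omega> * martingale_weight j t \<omega>)"
proof (rule Bochner_Integration.integrable_bound)
  show "integrable M (\<lambda>\<omega>. \<bar>j\<bar> * exp (8 * c * \<bar>j\<bar>) / (4 * c) * noise_bound \<omega>)"
    using integrable_noise_bound by simp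
  show "AE \<omega> in M. norm (noise_bound \<omega> * martingale_weight j t \<omega>)
      \<le> norm (\<bar>j\<bar> * exp (8 * c * \<bar>j\<bar>) / (4 * c) * noise_bound \<omega>)"
    using AE_regular
  proof eventually_elim
    case (elim \<omega>)
    have "0 \<le> \<bar>j\<bar> * exp (8 * c * \<bar>j\<bar>) / (4 * c) * noise_bound \<omega>"
      using c_pos noise_bound_nonneg[of \<omega>] by simp
    then show ?case
      using noise_bound_mult_martingale_weight_le[OF elim assms, of j] by (simp only: real_norm_def abs_of_nonneg)
  qed
qed measurable

lemma sum_sq_norm_coeff_le:
  assumes "regular \<omega>"
  shows "exp (- 4 * c * t) * (\<Sum>n\<in>{1..n0}. (norm (coeff j t n \<omega>))\<^sup>2) \<le> 4 * (\<bar>j\<bar> + norm \<theta>0)\<^sup>2 * martingale_weight j t \<omega>"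
proof (cases "\<gamma> 1 \<omega> \<le> j")
  case True
  define J where "J = \<bar>j\<bar> + norm \<theta>0"
  define N where "N = hit_index \<gamma> t \<omega>"
  have "(\<Sum>n\<in>{1..n0}. (norm (coeff j t n \<omega>))\<^sup>2) \<le> (\<Sum>n\<in>{1..N}. 4 * J\<^sup>2 * ((\<gamma> n \<omega>)\<^sup>2 * exp (4 * c * elapsed n \<omega>)))"
  proof (rule sum_le_sum_vanishing_outside)
    fix n assume n: "n \<in> {1..n0}" "n \<notin> {1..N}"
    then have "\<not> active j t n \<omega>"
      using less_hit_index_iff[OF assms, of "n - 1" t] unfolding active_def N_def by auto
    then show "(norm (coeff j t n \<omega>))\<^sup>2 = 0" by (simp add: norm_coeff)
  next
    fix n
    have "(norm (coeff j t n \<omega>))\<^sup>2 \<le> 4 * (\<gamma> n \<omega>)\<^sup>2 * (weight n \<omega>)\<^sup>2 * J\<^sup>2"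
    proof (cases "active j t n \<omega>")
      case True
      then have "norm (err (n - 1) \<omega>) \<le> J" unfolding J_def active_def by (intro norm_err_le) simp
      then have "(norm (err (n - 1) \<omega>))\<^sup>2 \<le> J\<^sup>2" by (simp add: power_mono)
      then show ?thesis
        using True by (simp add: norm_coeff power_mult_distrib mult_left_mono)
    qed (simp add: norm_coeff)
    also have "(weight n \<omega>)\<^sup>2 = exp (4 * c * elapsed n \<omega>)"
      unfolding weight_def by (simp add: power2_eq_square exp_add[symmetric])
    finally show "(norm (coeff j t n \<omega>))\<^sup>2 \<le> 4 * J\<^sup>2 * ((\<gamma> n \<omega>)\<^sup>2 * exp (4 * c * elapsed n \<omega>))"
      by (simp add: mult_ac)
  qed auto
  then have "exp (- 4 * c * t) * (\<Sum>n\<in>{1..n0}. (norm (coeff j t n \<omega>))\<^sup>2)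
      \<le> exp (- 4 * c * t) * (\<Sum>n\<in>{1..N}. 4 * J\<^sup>2 * ((\<gamma> n \<omega>)\<^sup>2 * exp (4 * c * elapsed n \<omega>)))"
    by (intro mult_left_mono) auto
  also have "\<dots> = 4 * J\<^sup>2 * martingale_weight j t \<omega>"
    using True unfolding martingale_weight_def discounted_sq_sum_def N_def elapsed_def
    by (simp add: sum_distrib_left mult_ac)
  finally show ?thesis unfolding J_def .
next
  case False
  then have "coeff j t n \<omega> = 0" for n by (simp add: coeff_def active_def)
  then show ?thesis using False by (simp add: martingale_weight_def)
qed

lemma martingale_term_measurable[measurable]: "martingale_term j t n0 \<in> borel_measurable M"
proof -
  have "(\<lambda>\<omega>. \<Sum>n\<in>{1..n0}. inner (coeff j t n \<omega>) (D n \<omega>)) \<in> borel_measurable M"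
    by (rule borel_measurable_sum_from_one) measurable
  then show ?thesis unfolding martingale_term_def by measurable
qed

lemma sq_sum_inner_coeff_isometry:
  "integrable M (\<lambda>\<omega>. (\<Sum>n\<in>{1..n0}. inner (coeff j t n \<omega>) (D n \<omega>))\<^sup>2) \<and>
    (\<integral>\<omega>. (\<Sum>n\<in>{1..n0}. inner (coeff j t n \<omega>) (D n \<omega>))\<^sup>2 \<partial>M)
      = (\<Sum>n\<in>{1..n0}. \<integral>\<omega>. (inner (coeff j t n \<omega>) (D n \<omega>))\<^sup>2 \<partial>M)"
  by (rule sq_sum_inner_D_isometry[where C = "2 * \<bar>j\<bar> * exp (2 * c * (t + \<bar>j\<bar>)) * (\<bar>j\<bar> + norm \<theta>0)"])
    (fact coeff_predictable norm_coeff_le)+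

lemma integrable_sq_martingale_term: "integrable M (\<lambda>\<omega>. (martingale_term j t n0 \<omega>)\<^sup>2)"
  using sq_sum_inner_coeff_isometry[of j t n0]
  unfolding martingale_term_def by (simp add: power_mult_distrib)

lemma integrable_noise_bound_mult_sq_norm_coeff:
  assumes "n \<ge> 1"
  shows "integrable M (\<lambda>\<omega>. noise_bound \<omega> * (norm (coeff j t n \<omega>))\<^sup>2)"
proof (rule Bochner_Integration.integrable_bound)
  define K where "K = 2 * \<bar>j\<bar> * exp (2 * c * (t + \<bar>j\<bar>)) * (\<bar>j\<bar> + norm \<theta>0)"
  show "integrable M (\<lambda>\<omega>. K\<^sup>2 * noise_bound \<omega>)" using integrable_noise_bound by simp
  show "AE \<omega> in M. norm (noise_bound \<omega> * (norm (coeff j t n \<omega>))\<^sup>2) \<le> norm (K\<^sup>2 * noise_bound \<omega>)"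
    using norm_coeff_le[of j t n] noise_bound_nonneg unfolding K_def[symmetric]
    by (intro AE_I2) (simp add: abs_mult mult_left_mono power_mono mult.commute)
qed (use assms in measurable)

lemma integral_sq_martingale_term_le:
  assumes "0 < t"
  shows "(\<integral>\<omega>. (martingale_term j t n0 \<omega>)\<^sup>2 \<partial>M)
    \<le> 4 * (\<bar>j\<bar> + norm \<theta>0)\<^sup>2 * (\<integral>\<omega>. noise_bound \<omega> * martingale_weight j t \<omega> \<partial>M)"
proof -
  define E where "E = exp (- 4 * c * t)"
  have E: "0 \<le> E" unfolding E_def by simp
  have square: "(martingale_term j t n0 \<omega>)\<^sup>2 = E * (\<Sum>n\<in>{1..n0}. inner (coeff j t n \<omega>) (D n \<omega>))\<^sup>2" for \<omega>
    unfolding martingale_term_def E_def by (simp add: power_mult_distrib power2_eq_square exp_add[symmetric])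
  have pointwise: "AE \<omega> in M. (inner (coeff j t n \<omega>) (D n \<omega>))\<^sup>2 \<le> noise_bound \<omega> * (norm (coeff j t n \<omega>))\<^sup>2"
    if "n \<ge> 1" for n
    using AE_regular by eventually_elim (rule sq_inner_D_le_noise_bound[OF _ that])
  have integrable_sq: "integrable M (\<lambda>\<omega>. (inner (coeff j t n \<omega>) (D n \<omega>))\<^sup>2)" if "n \<ge> 1" for n
    using that
    by (intro integrable_sq_inner_D[where C = "2 * \<bar>j\<bar> * exp (2 * c * (t + \<bar>j\<bar>)) * (\<bar>j\<bar> + norm \<theta>0)"]
        coeff_measurable norm_coeff_le)
  have "(\<integral>\<omega>. (martingale_term j t n0 \<omega>)\<^sup>2 \<partial>M)
      = E * (\<Sum>n\<in>{1..n0}. \<integral>\<omega>. (inner (coeff j t n \<omega>) (D n \<omega>))\<^sup>2 \<partial>M)"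
    using sq_sum_inner_coeff_isometry[of j t n0] unfolding square by simp
  also have "\<dots> \<le> E * (\<Sum>n\<in>{1..n0}. \<integral>\<omega>. noise_bound \<omega> * (norm (coeff j t n \<omega>))\<^sup>2 \<partial>M)"
    using E pointwise integrable_noise_bound_mult_sq_norm_coeff integrable_sq
    by (intro mult_left_mono sum_mono integral_mono_AE) auto
  also have "\<dots> = (\<integral>\<omega>. noise_bound \<omega> * (E * (\<Sum>n\<in>{1..n0}. (norm (coeff j t n \<omega>))\<^sup>2)) \<partial>M)"
    using integrable_noise_bound_mult_sq_norm_coeff
    by (simp add: Bochner_Integration.integral_sum[symmetric] sum_distrib_left mult_ac)
  also have "\<dots> \<le> (\<integral>\<omega>. 4 * (\<bar>j\<bar> + norm \<theta>0)\<^sup>2 * (noise_bound \<omega> * martingale_weight j t \<omega>) \<partial>M)"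
  proof (rule integral_mono_AE')
    show "integrable M (\<lambda>\<omega>. 4 * (\<bar>j\<bar> + norm \<theta>0)\<^sup>2 * (noise_bound \<omega> * martingale_weight j t \<omega>))"
      using integrable_noise_bound_mult_martingale_weight[OF assms] by simp
    show "AE \<omega> in M. noise_bound \<omega> * (E * (\<Sum>n\<in>{1..n0}. (norm (coeff j t n \<omega>))\<^sup>2))
        \<le> 4 * (\<bar>j\<bar> + norm \<theta>0)\<^sup>2 * (noise_bound \<omega> * martingale_weight j t \<omega>)"
      using AE_regular
    proof eventually_elim
      case (elim \<omega>)
      show ?case
        using mult_left_mono[OF sum_sq_norm_coeff_le[OF elim, of t j n0]
            noise_bound_nonneg[of \<omega>]]
        unfolding E_def by (simp add: mult_ac)
    qed
    show "AE \<omega> in M. 0 \<le> 4 * (\<bar>j\<bar> + norm \<theta>0)\<^sup>2 * (noise_bound \<omega> * martingale_weight j t \<omega>)"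
      by (simp add: noise_bound_nonneg martingale_weight_nonneg)
  qed
  finally show ?thesis by simp
qed

definition stable :: "'a \<Rightarrow> bool" where
  "stable \<omega> \<longleftrightarrow> bdd_above ((\<lambda>n. norm (\<Theta> n \<omega>)) ` {1..})"

lemma pred_stable[measurable]: "Measurable.pred M stable"
  unfolding stable_def bdd_above_image_iff_nat_bound Ball_def by measurable

lemma pred_confined[measurable]: "Measurable.pred M (confined j)"
  unfolding confined_def by measurable

lemma drift_term_measurable[measurable]: "drift_term j t \<in> borel_measurable M"
  unfolding drift_term_def err_def by measurable

lemma eventually_confined:
  assumes "stable \<omega>"
  shows "\<forall>\<^sub>F j in sequentially. confined (real j) \<omega>"
proof -
  obtain B :: nat where B: "\<And>n. n \<in> {1..} \<Longrightarrow> norm (\<Theta> n \<omega>) \<le> real B"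
    using assms unfolding stable_def bdd_above_image_iff_nat_bound by blast
  obtain j0 :: nat where j0: "real B + norm (\<Theta> 0 \<omega>) + \<bar>\<gamma> 1 \<omega>\<bar> \<le> real j0"
    using real_arch_simple by blast
  have "confined (real j) \<omega>" if "j0 \<le> j" for j
  proof -
    have j: "real B + norm (\<Theta> 0 \<omega>) + \<bar>\<gamma> 1 \<omega>\<bar> \<le> real j"
      using j0 that by (simp add: order_trans)
    have "norm (\<Theta> k \<omega>) \<le> real j" for k
    proof (cases "k = 0")
      case False
      then have "norm (\<Theta> k \<omega>) \<le> real B" using B[of k] by simp
      then show ?thesis using j norm_ge_zero[of "\<Theta> 0 \<omega>"] abs_ge_zero[of "\<gamma> 1 \<omega>"] by linarith
    qed (use j in simp)
    moreover have "\<gamma> 1 \<omega> \<le> real j" using j norm_ge_zero[of "\<Theta> 0 \<omega>"] by linarith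
    ultimately show ?thesis unfolding confined_def by blast
  qed
  then show ?thesis unfolding eventually_sequentially by blast
qed

lemma prob_escape_tendsto_zero:
  "(\<lambda>j::nat. prob {\<omega> \<in> space M. stable \<omega> \<and> \<not> confined (real j) \<omega>}) \<longlonglongrightarrow> 0"
proof (rule prob_tendsto_zero_sequentially)
  show "AE \<omega> in M. \<forall>\<^sub>F j in sequentially. \<omega> \<notin> {\<omega> \<in> space M. stable \<omega> \<and> \<not> confined (real j) \<omega>}"
  proof (rule AE_I2)
    fix \<omega>
    show "\<forall>\<^sub>F j in sequentially. \<omega> \<notin> {\<omega> \<in> space M. stable \<omega> \<and> \<not> confined (real j) \<omega>}"
    proof (cases "stable \<omega>")
      case True
      then show ?thesis by (rule eventually_mono[OF eventually_confined]) simp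
    qed simp
  qed
qed measurable

lemma drift_term_tendsto_zero:
  assumes "regular \<omega>"
  shows "((\<lambda>t. drift_term j t \<omega>) \<longlongrightarrow> 0) at_top"
proof -
  have "((\<lambda>t. exp (- 2 * c * t)) \<longlongrightarrow> 0) at_top"
    using tendsto_exp_neg_mult_at_top[of "2 * c"] c_pos by simp
  then have "((\<lambda>t. exp (- 2 * c * t) * (norm (err 0 \<omega>))\<^sup>2 + 2 * ((g_bound j)\<^sup>2 + noise_bound \<omega>)
      * discounted_sq_sum (2 * c) (\<lambda>n. \<gamma> n \<omega>) (hit_index \<gamma> t \<omega>) t)
      \<longlongrightarrow> 0 * (norm (err 0 \<omega>))\<^sup>2 + 2 * ((g_bound j)\<^sup>2 + noise_bound \<omega>) * 0) at_top"
    using c_pos by (intro tendsto_intros discounted_sq_sum_hit_tendsto_zero assms) simp_all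
  then show ?thesis unfolding drift_term_def by simp
qed

lemma prob_drift_term_ge_tendsto_zero:
  assumes "0 < \<delta>"
  shows "((\<lambda>t. prob {\<omega> \<in> space M. \<delta> \<le> drift_term j t \<omega>}) \<longlongrightarrow> 0) at_top"
proof (rule prob_tendsto_zero_at_top)
  show "AE \<omega> in M. \<forall>\<^sub>F t in at_top. \<omega> \<notin> {\<omega> \<in> space M. \<delta> \<le> drift_term j t \<omega>}"
    using AE_regular
  proof eventually_elim
    case (elim \<omega>)
    have "\<forall>\<^sub>F t in at_top. drift_term j t \<omega> < \<delta>"
      using drift_term_tendsto_zero[OF elim] assms by (rule order_tendstoD)
    then show ?case by eventually_elim simp
  qed
qed measurable

lemma martingale_weight_tendsto_zero:
  assumes "regular \<omega>"
  shows "((\<lambda>t. martingale_weight j t \<omega>) \<longlongrightarrow> 0) at_top"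
  using discounted_sq_sum_hit_tendsto_zero[OF assms, of "4 * c"] c_pos
  unfolding martingale_weight_def by (cases "\<gamma> 1 \<omega> \<le> j") simp_all

lemma integral_noise_bound_mult_martingale_weight_tendsto_zero:
  "((\<lambda>t. \<integral>\<omega>. noise_bound \<omega> * martingale_weight j t \<omega> \<partial>M) \<longlongrightarrow> 0) at_top"
proof -
  have "((\<lambda>t. \<integral>\<omega>. noise_bound \<omega> * martingale_weight j t \<omega> \<partial>M) \<longlongrightarrow> (\<integral>\<omega>. 0 \<partial>M)) at_top"
  proof (rule integral_dominated_convergence_at_top[where w = "\<lambda>\<omega>. \<bar>j\<bar> * exp (8 * c * \<bar>j\<bar>) / (4 * c) * noise_bound \<omega>"])
    show "AE \<omega> in M. ((\<lambda>t. noise_bound \<omega> * martingale_weight j t \<omega>) \<longlongrightarrow> 0) at_top"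
      using AE_regular
      by eventually_elim (use tendsto_mult_right_zero[OF martingale_weight_tendsto_zero] in blast)
    show "\<forall>\<^sub>F t in at_top. AE \<omega> in M. norm (noise_bound \<omega> * martingale_weight j t \<omega>)
        \<le> \<bar>j\<bar> * exp (8 * c * \<bar>j\<bar>) / (4 * c) * noise_bound \<omega>"
      using eventually_gt_at_top[of 0]
    proof eventually_elim
      case (elim t)
      show ?case using AE_regular by eventually_elim (rule noise_bound_mult_martingale_weight_le[OF _ elim])
    qed
  qed (use integrable_noise_bound in simp_all)
  then show ?thesis by simp
qed

lemma prob_elapsed_less_tendsto_zero: "(\<lambda>n. prob {\<omega> \<in> space M. elapsed n \<omega> < t}) \<longlonglongrightarrow> 0"
proof (rule prob_tendsto_zero_sequentially)
  show "AE \<omega> in M. \<forall>\<^sub>F n in sequentially. \<omega> \<notin> {\<omega> \<in> space M. elapsed n \<omega> < t}"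
    using AE_regular
  proof eventually_elim
    case (elim \<omega>)
    obtain m where "t \<le> elapsed m \<omega>" using regular_elapsed_unbounded[OF elim] by blast
    then have "t \<le> elapsed n \<omega>" if "m \<le> n" for n
      using regular_elapsed_mono[OF elim that] by linarith
    then show ?case unfolding eventually_sequentially by (auto simp: not_less)
  qed
qed measurable

definition truncated_err :: "real \<Rightarrow> 'a \<Rightarrow> real" where
  "truncated_err t \<omega> = min 1 (norm (\<Theta> (hit_index \<gamma> t \<omega>) \<omega> - \<theta>0) * indicator {\<omega>. stable \<omega>} \<omega>)"

lemma truncated_err_le:
  assumes \<epsilon>: "0 < \<epsilon>" and "regular \<omega>" and \<omega>: "\<omega> \<in> space M"
  shows "truncated_err t \<omega> \<le> \<epsilon> + indicator {\<omega> \<in> space M. stable \<omega> \<and> \<not> confined j \<omega>} \<omega>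
    + indicator {\<omega> \<in> space M. \<epsilon>\<^sup>2 / 2 \<le> drift_term j t \<omega>} \<omega>
    + indicator {\<omega> \<in> space M. elapsed n0 \<omega> < t} \<omega> + (martingale_term j t n0 \<omega> / (\<epsilon>\<^sup>2 / 2))\<^sup>2"
proof (cases "stable \<omega> \<and> confined j \<omega> \<and> t \<le> elapsed n0 \<omega>")
  case True
  then have "(norm (err (hit_index \<gamma> t \<omega>) \<omega>))\<^sup>2 \<le> drift_term j t \<omega> + martingale_term j t n0 \<omega>"
    using hit_index_le by (intro sq_norm_err_hit_le assms(2)) auto
  from min_one_le_split[OF \<epsilon> this]
  have "truncated_err t \<omega> \<le> \<epsilon> + indicator {\<omega> \<in> space M. \<epsilon>\<^sup>2 / 2 \<le> drift_term j t \<omega>} \<omega>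
      + (martingale_term j t n0 \<omega> / (\<epsilon>\<^sup>2 / 2))\<^sup>2"
    using True \<omega> unfolding truncated_err_def err_def by (simp add: of_bool_def split: split_indicator if_splits)
  moreover have "0 \<le> (indicator {\<omega> \<in> space M. stable \<omega> \<and> \<not> confined j \<omega>} \<omega> :: real)"
    and "0 \<le> (indicator {\<omega> \<in> space M. elapsed n0 \<omega> < t} \<omega> :: real)" by simp_all
  ultimately show ?thesis by linarith
next
  case False
  define I1 where "I1 = (indicator {\<omega> \<in> space M. stable \<omega> \<and> \<not> confined j \<omega>} \<omega> :: real)"
  define I3 where "I3 = (indicator {\<omega> \<in> space M. elapsed n0 \<omega> < t} \<omega> :: real)"
  have "0 \<le> I1" "0 \<le> I3" "0 \<le> (indicator {\<omega> \<in> space M. \<epsilon>\<^sup>2 / 2 \<le> drift_term j t \<omega>} \<omega> :: real)"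
    "0 \<le> (martingale_term j t n0 \<omega> / (\<epsilon>\<^sup>2 / 2))\<^sup>2"
    unfolding I1_def I3_def by simp_all
  moreover have "truncated_err t \<omega> \<le> 0 \<or> (truncated_err t \<omega> \<le> 1 \<and> (I1 = 1 \<or> I3 = 1))"
  proof (cases "stable \<omega>")
    case True
    then have "I1 = 1 \<or> I3 = 1" using False \<omega> unfolding I1_def I3_def by (auto simp: not_le)
    then show ?thesis unfolding truncated_err_def by simp
  qed (simp add: truncated_err_def)
  ultimately show ?thesis using \<epsilon> unfolding I1_def[symmetric] I3_def[symmetric] by linarith
qed

lemma expected_truncated_err_le_n0:
  assumes \<epsilon>: "0 < \<epsilon>" and t: "0 < t"
  shows "(\<integral>\<omega>. truncated_err t \<omega> \<partial>M) \<le> \<epsilon> + prob {\<omega> \<in> space M. stable \<omega> \<and> \<not> confined j \<omega>}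
    + prob {\<omega> \<in> space M. \<epsilon>\<^sup>2 / 2 \<le> drift_term j t \<omega>} + prob {\<omega> \<in> space M. elapsed n0 \<omega> < t}
    + 4 * (\<bar>j\<bar> + norm \<theta>0)\<^sup>2 * (\<integral>\<omega>. noise_bound \<omega> * martingale_weight j t \<omega> \<partial>M) / (\<epsilon>\<^sup>2 / 2)\<^sup>2"
proof -
  define A1 where "A1 = {\<omega> \<in> space M. stable \<omega> \<and> \<not> confined j \<omega>}"
  define A2 where "A2 = {\<omega> \<in> space M. \<epsilon>\<^sup>2 / 2 \<le> drift_term j t \<omega>}"
  define A3 where "A3 = {\<omega> \<in> space M. elapsed n0 \<omega> < t}"
  define d where "d = (\<epsilon>\<^sup>2 / 2)\<^sup>2"
  have d: "0 < d" unfolding d_def using \<epsilon> by simp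
  have [measurable]: "A1 \<in> sets M" "A2 \<in> sets M" "A3 \<in> sets M"
    unfolding A1_def A2_def A3_def by measurable
  have indicator: "integrable M (\<lambda>\<omega>. indicator A \<omega> :: real)" if "A \<in> sets M" for A
    using that by (intro integrable_real_indicator) (auto simp: less_top[symmetric])
  have square: "integrable M (\<lambda>\<omega>. (martingale_term j t n0 \<omega>)\<^sup>2 / d)"
    using integrable_sq_martingale_term by simp
  have "(\<integral>\<omega>. truncated_err t \<omega> \<partial>M)
      \<le> (\<integral>\<omega>. \<epsilon> + indicator A1 \<omega> + indicator A2 \<omega> + indicator A3 \<omega> + (martingale_term j t n0 \<omega>)\<^sup>2 / d \<partial>M)"
  proof (rule integral_mono_AE')
    show "integrable M (\<lambda>\<omega>. \<epsilon> + indicator A1 \<omega> + indicator A2 \<omega> + indicator A3 \<omega> + (martingale_term j t n0 \<omega>)\<^sup>2 / d)"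
      using indicator square by simp
    show "AE \<omega> in M. truncated_err t \<omega>
        \<le> \<epsilon> + indicator A1 \<omega> + indicator A2 \<omega> + indicator A3 \<omega> + (martingale_term j t n0 \<omega>)\<^sup>2 / d"
      using AE_regular AE_space
    proof eventually_elim
      case (elim \<omega>)
      show ?case using truncated_err_le[OF \<epsilon> elim, of t j n0]
        unfolding A1_def A2_def A3_def d_def by (simp add: power_divide)
    qed
    show "AE \<omega> in M. 0 \<le> \<epsilon> + indicator A1 \<omega> + indicator A2 \<omega> + indicator A3 \<omega> + (martingale_term j t n0 \<omega>)\<^sup>2 / d"
      using \<epsilon> d by (intro AE_I2) (auto intro!: add_nonneg_nonneg)
  qed
  also have "\<dots> = \<epsilon> + prob A1 + prob A2 + prob A3 + (\<integral>\<omega>. (martingale_term j t n0 \<omega>)\<^sup>2 \<partial>M) / d"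
    using indicator square integrable_sq_martingale_term by (simp add: prob_space sets.Int_space_eq2)
  also have "(\<integral>\<omega>. (martingale_term j t n0 \<omega>)\<^sup>2 \<partial>M) / d
      \<le> 4 * (\<bar>j\<bar> + norm \<theta>0)\<^sup>2 * (\<integral>\<omega>. noise_bound \<omega> * martingale_weight j t \<omega> \<partial>M) / d"
    using integral_sq_martingale_term_le[OF t, of j n0] d by (simp add: divide_right_mono)
  finally show ?thesis unfolding A1_def A2_def A3_def d_def by simp
qed

text \<open>Letting the horizon \<open>n0\<close> of the martingale term tend to infinity removes the event \<open>N\<^sub>t > n0\<close>.\<close>
lemma expected_truncated_err_le:
  assumes "0 < \<epsilon>" and "0 < t"
  shows "(\<integral>\<omega>. truncated_err t \<omega> \<partial>M) \<le> \<epsilon> + prob {\<omega> \<in> space M. stable \<omega> \<and> \<not> confined j \<omega>}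
    + prob {\<omega> \<in> space M. \<epsilon>\<^sup>2 / 2 \<le> drift_term j t \<omega>}
    + 4 * (\<bar>j\<bar> + norm \<theta>0)\<^sup>2 * (\<integral>\<omega>. noise_bound \<omega> * martingale_weight j t \<omega> \<partial>M) / (\<epsilon>\<^sup>2 / 2)\<^sup>2"
    (is "_ \<le> ?R")
proof (rule LIMSEQ_le_const)
  show "(\<lambda>n0. ?R + prob {\<omega> \<in> space M. elapsed n0 \<omega> < t}) \<longlonglongrightarrow> ?R"
    using tendsto_add[OF tendsto_const prob_elapsed_less_tendsto_zero] by simp
  show "\<exists>N. \<forall>n0\<ge>N. (\<integral>\<omega>. truncated_err t \<omega> \<partial>M) \<le> ?R + prob {\<omega> \<in> space M. elapsed n0 \<omega> < t}"
    using expected_truncated_err_le_n0[OF assms] by (simp add: algebra_simps)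
qed

theorem expected_truncated_err_tendsto_zero: "((\<lambda>t. \<integral>\<omega>. truncated_err t \<omega> \<partial>M) \<longlongrightarrow> 0) at_top"
proof (rule order_tendstoI)
  fix e :: real assume "e < 0"
  moreover have "0 \<le> (\<integral>\<omega>. truncated_err t \<omega> \<partial>M)" for t
    by (intro integral_nonneg_AE AE_I2) (simp add: truncated_err_def)
  ultimately show "\<forall>\<^sub>F t in at_top. e < (\<integral>\<omega>. truncated_err t \<omega> \<partial>M)"
    by (intro always_eventually allI) (rule less_le_trans)
next
  fix e :: real assume e: "0 < e"
  define \<epsilon> where "\<epsilon> = e / 4"
  have \<epsilon>: "0 < \<epsilon>" unfolding \<epsilon>_def using e by simp
  obtain j0 :: nat where j0: "prob {\<omega> \<in> space M. stable \<omega> \<and> \<not> confined (real j0) \<omega>} < \<epsilon>"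
    using order_tendstoD(2)[OF prob_escape_tendsto_zero \<epsilon>] unfolding eventually_sequentially by blast
  define K where "K = 4 * (\<bar>real j0\<bar> + norm \<theta>0)\<^sup>2 / (\<epsilon>\<^sup>2 / 2)\<^sup>2"
  have "\<forall>\<^sub>F t in at_top. prob {\<omega> \<in> space M. \<epsilon>\<^sup>2 / 2 \<le> drift_term (real j0) t \<omega>} < \<epsilon>"
    using \<epsilon> by (intro order_tendstoD(2)[OF prob_drift_term_ge_tendsto_zero]) simp_all
  moreover have "\<forall>\<^sub>F t in at_top. K * (\<integral>\<omega>. noise_bound \<omega> * martingale_weight (real j0) t \<omega> \<partial>M) < \<epsilon>"
    using tendsto_mult_right_zero[OF integral_noise_bound_mult_martingale_weight_tendsto_zero] \<epsilon>
    by (rule order_tendstoD(2))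
  ultimately show "\<forall>\<^sub>F t in at_top. (\<integral>\<omega>. truncated_err t \<omega> \<partial>M) < e"
    using eventually_gt_at_top[of 0]
  proof eventually_elim
    case (elim t)
    have "(\<integral>\<omega>. truncated_err t \<omega> \<partial>M) \<le> \<epsilon> + prob {\<omega> \<in> space M. stable \<omega> \<and> \<not> confined (real j0) \<omega>}
        + prob {\<omega> \<in> space M. \<epsilon>\<^sup>2 / 2 \<le> drift_term (real j0) t \<omega>}
        + K * (\<integral>\<omega>. noise_bound \<omega> * martingale_weight (real j0) t \<omega> \<partial>M)"
      using expected_truncated_err_le[OF \<epsilon> elim(3), of "real j0"] unfolding K_def by simp
    then show ?case using j0 elim(1,2) unfolding \<epsilon>_def by linarith
  qed
qed

end

theorem corollary4p11:
  fixes M :: "'a measure" and F :: "nat \<Rightarrow> 'a measure"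
    and \<gamma> :: "nat \<Rightarrow> 'a \<Rightarrow> real"
    and \<theta>0 :: "'d::euclidean_space" and g :: "'d \<Rightarrow> 'd" and c :: real
    and \<Theta> :: "nat \<Rightarrow> 'a \<Rightarrow> 'd" and D :: "nat \<Rightarrow> 'a \<Rightarrow> 'd"
  assumes "prob_space M"
    and "filtration (space M) F"
    and "\<And>n. subalgebra M (F n)"
    and "\<And>n. n \<ge> 1 \<Longrightarrow> \<gamma> n \<in> borel_measurable (F (n - 1))"
    and "AE \<omega> in M. limsup (\<lambda>n. ereal (\<gamma> n \<omega>)) = 0"
    and "AE \<omega> in M. (\<Sum>n. ennreal \<bar>\<gamma> (Suc n) \<omega>\<bar>) = \<infinity>"
    and "\<And>n. n \<ge> 1 \<Longrightarrow> AE \<omega> in M. \<gamma> (Suc n) \<omega> \<le> \<gamma> n \<omega>"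
    and "g \<in> borel_measurable borel"
    and "\<And>x. \<exists>e>0. bounded (g ` ball x e)"
    and "c > 0"
    and "\<And>\<theta>. inner (\<theta> - \<theta>0) (g \<theta>) \<le> - c * (norm (\<theta> - \<theta>0))\<^sup>2"
    and "\<And>n. \<Theta> n \<in> borel_measurable (F n)"
    and "\<And>n. n \<ge> 1 \<Longrightarrow> D n \<in> borel_measurable (F n)"
    and "(\<integral>\<^sup>+ \<omega>. (\<Squnion>n\<in>{1..}. ennreal ((norm (D n \<omega>))\<^sup>2)) \<partial>M) < \<infinity>"
    and "\<And>n. n \<ge> 1 \<Longrightarrow> AE \<omega> in M.
           \<Theta> n \<omega> = \<Theta> (n - 1) \<omega> + \<gamma> n \<omega> *\<^sub>R g (\<Theta> (n - 1) \<omega>) + \<gamma> n \<omega> *\<^sub>R D n \<omega>"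
    and "\<And>n b. n \<ge> 1 \<Longrightarrow> b \<in> Basis \<Longrightarrow>
           AE \<omega> in M. real_cond_exp M (F (n - 1)) (\<lambda>\<omega>. inner (D n \<omega>) b) \<omega> = 0"
  shows "Limsup at_top (\<lambda>t::real. ereal (\<integral>\<omega>. min 1 (norm (\<Theta> (hit_index \<gamma> t \<omega>) \<omega> - \<theta>0)
            * indicator {\<omega>. bdd_above ((\<lambda>n. norm (\<Theta> n \<omega>)) ` {1..})} \<omega>) \<partial>M)) = 0"
proof -
  interpret stochastic_approximation M F \<gamma> \<theta>0 g c \<Theta> D
    by (intro stochastic_approximation.intro stochastic_approximation_axioms.intro) (fact assms)+
  have "((\<lambda>t. ereal (\<integral>\<omega>. truncated_err t \<omega> \<partial>M)) \<longlongrightarrow> ereal 0) at_top"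
    using expected_truncated_err_tendsto_zero by (rule tendsto_ereal)
  then have "Limsup at_top (\<lambda>t. ereal (\<integral>\<omega>. truncated_err t \<omega> \<partial>M)) = 0"
    by (simp add: lim_imp_Limsup zero_ereal_def)
  then show ?thesis unfolding truncated_err_def stable_def .
qed

end
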